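(* For all integers $n,k\ge1$, there exists a $1$-gap planar graph with treewidth at least $n^{k+1}+1$ and radius at most $(2k+1)n+\lceil k/2\rceil+1$.
   Context: Graphs are finite, simple, undirected. An embedded graph has vertices as distinct points of $\mathbb{R}^2$ and each edge $uv$ as a curve with endpoints $u,v$ containing no vertex in its interior; a crossing is a point common to two edges other than their endpoints. An embedded graph is $1$-gap planar if every crossing can be charged to one of the two edges involved so that at most one crossing is charged to each edge; a graph is $1$-gap planar if it is isomorphic to a $1$-gap planar embedded graph. *)

theory Defs
  imports "HOL-Analysis.Analysis" "HOL-Library.Extended_Nat"
begin

definition sgraph :: "'a set \<Rightarrow> 'a set set \<Rightarrow> bool" where
  "sgraph V E \<longleftrightarrow> finite V \<and> (\<forall>e\<in>E. \<exists>u v. u \<in> V \<and> v \<in> V \<and> u \<noteq> v \<and> e = {u, v})"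

text \<open>A walk is a nonempty vertex list with consecutive vertices adjacent; its length is length xs - 1.\<close>
definition walk :: "'a set \<Rightarrow> 'a set set \<Rightarrow> 'a list \<Rightarrow> bool" where
  "walk V E xs \<longleftrightarrow> xs \<noteq> [] \<and> set xs \<subseteq> V \<and> (\<forall>i. Suc i < length xs \<longrightarrow> {xs ! i, xs ! Suc i} \<in> E)"

definition connected_graph :: "'a set \<Rightarrow> 'a set set \<Rightarrow> bool" where
  "connected_graph V E \<longleftrightarrow> (\<forall>u\<in>V. \<forall>v\<in>V. \<exists>xs. walk V E xs \<and> hd xs = u \<and> last xs = v)"

definition is_tree :: "'a set \<Rightarrow> 'a set set \<Rightarrow> bool" where
  "is_tree N T \<longleftrightarrow> sgraph N T \<and> N \<noteq> {} \<and> connected_graph N T \<and> card T + 1 = card N"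

definition tree_decomposition ::
  "'a set \<Rightarrow> 'a set set \<Rightarrow> nat set \<Rightarrow> nat set set \<Rightarrow> (nat \<Rightarrow> 'a set) \<Rightarrow> bool" where
  "tree_decomposition V E N T B \<longleftrightarrow>
     is_tree N T \<and>
     (\<forall>t\<in>N. B t \<subseteq> V) \<and>
     (\<forall>v\<in>V. \<exists>t\<in>N. v \<in> B t) \<and>
     (\<forall>e\<in>E. \<exists>t\<in>N. e \<subseteq> B t) \<and>
     (\<forall>v\<in>V. connected_graph {t\<in>N. v \<in> B t} {f\<in>T. f \<subseteq> {t\<in>N. v \<in> B t}})"

definition td_width :: "nat set \<Rightarrow> (nat \<Rightarrow> 'a set) \<Rightarrow> nat" where
  "td_width N B = Max ((\<lambda>t. card (B t)) ` N) - 1"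

definition treewidth :: "'a set \<Rightarrow> 'a set set \<Rightarrow> nat" where
  "treewidth V E = Min {w. \<exists>N T B. tree_decomposition V E N T B \<and> w = td_width N B}"

text \<open>Graph distance (infinite if no walk) and radius.\<close>
definition gdist :: "'a set \<Rightarrow> 'a set set \<Rightarrow> 'a \<Rightarrow> 'a \<Rightarrow> enat" where
  "gdist V E u v = (INF xs\<in>{xs. walk V E xs \<and> hd xs = u \<and> last xs = v}. enat (length xs - 1))"

definition graph_radius :: "'a set \<Rightarrow> 'a set set \<Rightarrow> enat" where
  "graph_radius V E = (INF c\<in>V. SUP u\<in>V. gdist V E c u)"

definition embedding :: "'a set \<Rightarrow> 'a set set \<Rightarrow> ('a \<Rightarrow> complex) \<Rightarrow> ('a set \<Rightarrow> real \<Rightarrow> complex) \<Rightarrow> bool" where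
  "embedding V E pos \<gamma> \<longleftrightarrow>
     inj_on pos V \<and>
     (\<forall>e\<in>E. path (\<gamma> e) \<and>
        (\<forall>u v. e = {u, v} \<longrightarrow> {pathstart (\<gamma> e), pathfinish (\<gamma> e)} = {pos u, pos v}) \<and>
        (\<forall>w\<in>V. pos w \<notin> \<gamma> e ` {0<..<1}))"

definition crossings :: "'a set \<Rightarrow> 'a set set \<Rightarrow> ('a \<Rightarrow> complex) \<Rightarrow> ('a set \<Rightarrow> real \<Rightarrow> complex) \<Rightarrow> (complex \<times> 'a set set) set" where
  "crossings V E pos \<gamma> = {(p, {e, f}) | p e f. e \<in> E \<and> f \<in> E \<and> e \<noteq> f \<and>
       p \<in> path_image (\<gamma> e) \<and> p \<in> path_image (\<gamma> f) \<and> p \<notin> pos ` (e \<union> f)}"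

definition one_gap_planar_embedding :: "'a set \<Rightarrow> 'a set set \<Rightarrow> ('a \<Rightarrow> complex) \<Rightarrow> ('a set \<Rightarrow> real \<Rightarrow> complex) \<Rightarrow> bool" where
  "one_gap_planar_embedding V E pos \<gamma> \<longleftrightarrow>
     embedding V E pos \<gamma> \<and>
     (\<exists>ch. (\<forall>c\<in>crossings V E pos \<gamma>. ch c \<in> snd c) \<and>
           (\<forall>g\<in>E. \<forall>c1\<in>crossings V E pos \<gamma>. \<forall>c2\<in>crossings V E pos \<gamma>.
               ch c1 = g \<longrightarrow> ch c2 = g \<longrightarrow> c1 = c2))"

definition one_gap_planar :: "'a set \<Rightarrow> 'a set set \<Rightarrow> bool" where
  "one_gap_planar V E \<longleftrightarrow> (\<exists>pos \<gamma>. one_gap_planar_embedding V E pos \<gamma>)"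

end

theory Submission
  imports Defs
begin

(*
  The graph is an M x M grid, M = 2 ^ m, together with an H-tree of depth m - 1 whose
  vertices sit between the grid lines; every tree vertex is joined by short diagonal spokes
  to the four grid vertices around it. The grid forces treewidth at least M - 1, while every
  vertex lies within distance 2m - 1 of the root of the H-tree. Drawn with straight segments
  (grid on the odd, tree on the even lattice lines), the only crossings are tree edges passing
  through the midpoint of a grid edge, and every grid edge is crossed at most once, so
  charging each crossing to its grid edge shows 1-gap planarity. Choosing
  m = k n + (n + 1) div 2 + 1 gives the bounds.
*)

section \<open>Walks and connectivity\<close>

lemma walk_iff_successively:
  "walk V E xs \<longleftrightarrow> xs \<noteq> [] \<and> set xs \<subseteq> V \<and> successively (\<lambda>x y. {x, y} \<in> E) xs"
  by (simp add: walk_def successively_conv_nth)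

lemma walk_Nil [simp]: "\<not> walk V E []"
  by (simp add: walk_def)

lemma walk_singleton [simp]: "walk V E [x] \<longleftrightarrow> x \<in> V"
  by (simp add: walk_def)

lemma walk_Cons_Cons [simp]:
  "walk V E (x # y # zs) \<longleftrightarrow> x \<in> V \<and> {x, y} \<in> E \<and> walk V E (y # zs)"
  by (auto simp: walk_iff_successively)

lemma walk_append:
  assumes "walk V E xs" "walk V E ys" "last xs = hd ys"
  shows "walk V E (xs @ tl ys)" "hd (xs @ tl ys) = hd xs" "last (xs @ tl ys) = last ys"
    "length (xs @ tl ys) = length xs + length ys - 1"
proof -
  obtain y ys' where ys: "ys = y # ys'"
    using assms(2) by (cases ys) (auto simp: walk_def)
  have "xs \<noteq> []"
    using assms(1) by (auto simp: walk_def)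
  then show "walk V E (xs @ tl ys)" "hd (xs @ tl ys) = hd xs" "last (xs @ tl ys) = last ys"
    "length (xs @ tl ys) = length xs + length ys - 1"
    using assms unfolding ys walk_iff_successively
    by (auto simp: successively_append_iff successively_Cons)
qed

lemma walk_rev: "walk V E xs \<Longrightarrow> walk V E (rev xs)"
  by (simp add: walk_iff_successively insert_commute)

lemma walk_mono: "walk V E xs \<Longrightarrow> V \<subseteq> V' \<Longrightarrow> E \<subseteq> E' \<Longrightarrow> walk V' E' xs"
  unfolding walk_def by blast

lemma walk_induced: "walk V E xs \<Longrightarrow> set xs \<subseteq> X \<Longrightarrow> walk X {e \<in> E. e \<subseteq> X} xs"
  unfolding walk_def by (auto dest: nth_mem)

lemma walk_map_upt:
  assumes "a \<le> b" "\<forall>k\<in>{a..b}. f k \<in> V" "\<forall>k\<in>{a..<b}. {f k, f (Suc k)} \<in> E"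
  shows "walk V E (map f [a..<Suc b])"
  using assms unfolding walk_def by (auto simp del: upt_Suc)

definition reachable :: "'a set \<Rightarrow> 'a set set \<Rightarrow> 'a \<Rightarrow> 'a \<Rightarrow> bool" where
  "reachable V E u v \<longleftrightarrow> (\<exists>xs. walk V E xs \<and> hd xs = u \<and> last xs = v)"

lemma connected_graph_iff_reachable:
  "connected_graph V E \<longleftrightarrow> (\<forall>u\<in>V. \<forall>v\<in>V. reachable V E u v)"
  by (simp add: connected_graph_def reachable_def)

lemma reachable_trans: "reachable V E u v \<Longrightarrow> reachable V E v w \<Longrightarrow> reachable V E u w"
  unfolding reachable_def by (metis walk_append(1-3))

lemma reachable_mono: "reachable V E u v \<Longrightarrow> V \<subseteq> V' \<Longrightarrow> E \<subseteq> E' \<Longrightarrow> reachable V' E' u v"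
  unfolding reachable_def by (metis walk_mono)

definition reachable_within :: "'a set \<Rightarrow> 'a set set \<Rightarrow> nat \<Rightarrow> 'a \<Rightarrow> 'a \<Rightarrow> bool" where
  "reachable_within V E d u v \<longleftrightarrow> (\<exists>xs. walk V E xs \<and> hd xs = u \<and> last xs = v \<and> length xs \<le> Suc d)"

lemma reachable_within_refl: "u \<in> V \<Longrightarrow> reachable_within V E 0 u u"
  unfolding reachable_within_def by (intro exI[of _ "[u]"]) simp

lemma reachable_within_edge: "{u, v} \<in> E \<Longrightarrow> u \<in> V \<Longrightarrow> v \<in> V \<Longrightarrow> reachable_within V E 1 u v"
  unfolding reachable_within_def by (intro exI[of _ "[u, v]"]) simp

lemma reachable_within_trans:
  "reachable_within V E d1 u v \<Longrightarrow> reachable_within V E d2 v w \<Longrightarrow> reachable_within V E (d1 + d2) u w"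
proof -
  assume "reachable_within V E d1 u v" "reachable_within V E d2 v w"
  then obtain xs ys where "walk V E xs" "hd xs = u" "last xs = v" "length xs \<le> Suc d1"
    "walk V E ys" "hd ys = v" "last ys = w" "length ys \<le> Suc d2"
    unfolding reachable_within_def by blast
  then show ?thesis
    unfolding reachable_within_def using walk_append[of V E xs ys]
    by (intro exI[of _ "xs @ tl ys"]) simp
qed

lemma reachable_within_mono: "reachable_within V E d u v \<Longrightarrow> d \<le> d' \<Longrightarrow> reachable_within V E d' u v"
  unfolding reachable_within_def by fastforce

lemma graph_radius_le:
  assumes "c \<in> V" "\<forall>v\<in>V. reachable_within V E d c v"
  shows "graph_radius V E \<le> enat d"
proof -
  have "gdist V E c v \<le> enat d" if "v \<in> V" for v
  proof -
    obtain xs where "walk V E xs" "hd xs = c" "last xs = v" "length xs \<le> Suc d"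
      using assms(2) \<open>v \<in> V\<close> unfolding reachable_within_def by blast
    then have "gdist V E c v \<le> enat (length xs - 1)"
      unfolding gdist_def by (intro INF_lower) blast
    also have "\<dots> \<le> enat d"
      using \<open>length xs \<le> Suc d\<close> by simp
    finally show ?thesis .
  qed
  then have "(SUP v\<in>V. gdist V E c v) \<le> enat d"
    by (rule SUP_least)
  moreover have "graph_radius V E \<le> (SUP v\<in>V. gdist V E c v)"
    unfolding graph_radius_def using assms(1) by (rule INF_lower)
  ultimately show ?thesis
    by (rule order_trans[rotated])
qed

definition connected_in :: "'a set set \<Rightarrow> 'a set \<Rightarrow> bool" where
  "connected_in E X \<longleftrightarrow> connected_graph X {e \<in> E. e \<subseteq> X}"

lemma connected_inI:
  assumes "\<And>u v. u \<in> X \<Longrightarrow> v \<in> X \<Longrightarrow> \<exists>xs. walk V E xs \<and> set xs \<subseteq> X \<and> hd xs = u \<and> last xs = v"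
  shows "connected_in E X"
  unfolding connected_in_def connected_graph_def using assms walk_induced by metis

lemma connected_inI_centre:
  assumes "c \<in> X" "\<And>u. u \<in> X \<Longrightarrow> \<exists>xs. walk V E xs \<and> set xs \<subseteq> X \<and> hd xs = u \<and> last xs = c"
  shows "connected_in E X"
proof (rule connected_inI)
  fix u v assume "u \<in> X" "v \<in> X"
  then obtain xs ys where xs: "walk V E xs" "set xs \<subseteq> X" "hd xs = u" "last xs = c"
    and ys: "walk V E ys" "set ys \<subseteq> X" "hd ys = v" "last ys = c"
    using assms(2) by meson
  have tl_subset: "set (tl zs) \<subseteq> set zs" for zs :: "'a list"
    by (cases zs) auto
  have "ys \<noteq> []"
    using ys(1) by auto
  then have "walk V E (xs @ tl (rev ys))" "hd (xs @ tl (rev ys)) = u" "last (xs @ tl (rev ys)) = v"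
    using walk_append[OF xs(1) walk_rev[OF ys(1)]] xs(3,4) ys(3,4) by (simp_all add: hd_rev last_rev)
  moreover have "set (xs @ tl (rev ys)) \<subseteq> X"
    using xs(2) ys(2) tl_subset[of "rev ys"] by auto
  ultimately show "\<exists>xs. walk V E xs \<and> set xs \<subseteq> X \<and> hd xs = u \<and> last xs = v"
    by blast
qed

section \<open>Subtrees of a tree have the Helly property\<close>

lemma sgraph_edgeE:
  assumes "sgraph V E" "e \<in> E"
  obtains a b where "a \<in> V" "b \<in> V" "a \<noteq> b" "e = {a, b}"
  using assms unfolding sgraph_def by blast

lemma sgraph_edge_subset: "sgraph V E \<Longrightarrow> e \<in> E \<Longrightarrow> e \<subseteq> V"
  by (auto elim: sgraph_edgeE)

lemma sgraph_finite_edges: "sgraph V E \<Longrightarrow> finite E"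
  by (meson Pow_iff finite_Pow_iff finite_subset sgraph_def sgraph_edge_subset subsetI)

lemma sgraph_degree_sum:
  assumes "sgraph V E"
  shows "(\<Sum>v\<in>V. card {e \<in> E. v \<in> e}) = 2 * card E"
proof -
  have fin: "finite V" "finite E"
    using assms sgraph_finite_edges unfolding sgraph_def by auto
  have "(\<Sum>v\<in>V. card {e \<in> E. v \<in> e}) = (\<Sum>v\<in>V. \<Sum>e\<in>E. if v \<in> e then 1 else 0)"
    using fin by (simp add: sum.If_cases Int_def)
  also have "\<dots> = (\<Sum>e\<in>E. \<Sum>v\<in>V. if v \<in> e then 1 else 0)"
    by (rule sum.swap)
  also have "\<dots> = (\<Sum>e\<in>E. 2)"
  proof (rule sum.cong)
    fix e assume "e \<in> E"
    then obtain a b where "a \<in> V" "b \<in> V" "a \<noteq> b" "e = {a, b}"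
      using assms sgraph_edgeE by metis
    have "(\<Sum>v\<in>V. if v \<in> e then 1 else 0) = card (V \<inter> e)"
      using fin(1) by (simp add: sum.If_cases Int_def)
    also have "V \<inter> e = {a, b}"
      using \<open>a \<in> V\<close> \<open>b \<in> V\<close> \<open>e = {a, b}\<close> by blast
    finally show "(\<Sum>v\<in>V. if v \<in> e then 1 else 0) = (2::nat)"
      using \<open>a \<noteq> b\<close> by simp
  qed simp
  finally show ?thesis
    by simp
qed

lemma tree_has_leaf:
  assumes "is_tree N T" "2 \<le> card N"
  obtains l u where "l \<in> N" "u \<in> N" "l \<noteq> u" "{l, u} \<in> T" "\<forall>f\<in>T. l \<in> f \<longrightarrow> f = {l, u}"
proof -
  have sg: "sgraph N T" and con: "connected_graph N T" and ct: "card T + 1 = card N"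
    using assms(1) unfolding is_tree_def by auto
  have fin: "finite N" "finite T"
    using sg sgraph_finite_edges unfolding sgraph_def by auto
  have no_isolated: "{f \<in> T. v \<in> f} \<noteq> {}" if "v \<in> N" for v
  proof -
    obtain w where "w \<in> N" "w \<noteq> v"
      using assms(2) \<open>v \<in> N\<close> fin(1) by (metis card_le_Suc0_iff_eq not_less_eq_eq numeral_2_eq_2)
    then obtain xs where "walk N T xs" "hd xs = v" "last xs = w"
      using con \<open>v \<in> N\<close> unfolding connected_graph_def by blast
    moreover from this obtain y ys where "xs = v # y # ys"
      using \<open>w \<noteq> v\<close> by (cases xs; cases "tl xs") auto
    ultimately show ?thesis
      by auto
  qed
  have "\<exists>l\<in>N. card {f \<in> T. l \<in> f} < 2"
  proof (rule ccontr)
    assume "\<not> ?thesis"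
    then have "(\<Sum>v\<in>N. 2) \<le> (\<Sum>v\<in>N. card {f \<in> T. v \<in> f})"
      by (intro sum_mono) (simp add: not_less)
    then show False
      using sgraph_degree_sum[OF sg] ct by simp
  qed
  then obtain l where l: "l \<in> N" "card {f \<in> T. l \<in> f} < 2"
    by blast
  then have "card {f \<in> T. l \<in> f} = 1"
    using no_isolated[OF l(1)] fin(2) by (auto simp: less_2_cases_iff card_eq_0_iff)
  then obtain f0 where f0: "{f \<in> T. l \<in> f} = {f0}"
    using card_1_singletonE by blast
  then obtain a b where "a \<in> N" "b \<in> N" "a \<noteq> b" "f0 = {a, b}" "l \<in> f0" "f0 \<in> T"
    using sg by (metis (no_types, lifting) insertI1 mem_Collect_eq sgraph_edgeE)
  then obtain u where "u \<in> N" "l \<noteq> u" "f0 = {l, u}"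
    by auto
  then show ?thesis
    using that[of l u] l(1) f0 \<open>f0 \<in> T\<close> by blast
qed

lemma walk_avoiding_leaf:
  assumes leaf: "\<forall>f\<in>F. l \<in> f \<longrightarrow> f = {l, u}" and "l \<noteq> u"
  shows "walk W F xs \<Longrightarrow> hd xs \<noteq> l \<Longrightarrow> last xs \<noteq> l \<Longrightarrow>
     \<exists>ys. walk (W - {l}) {f \<in> F. l \<notin> f} ys \<and> hd ys = hd xs \<and> last ys = last xs"
proof (induction xs rule: induct_list012)
  case (3 x y zs)
  show ?case
  proof (cases "y = l")
    case False
    then obtain ys where ys: "walk (W - {l}) {f \<in> F. l \<notin> f} ys" "hd ys = y" "last ys = last (y # zs)"
      using "3.IH"(2) "3.prems" by auto
    then have "walk (W - {l}) {f \<in> F. l \<notin> f} (x # ys)"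
      using "3.prems" False by (cases ys) auto
    then show ?thesis
      using ys by (intro exI[of _ "x # ys"]) auto
  next
    case True
    \<comment> \<open>a walk entering the leaf must leave it through the same edge, so it returns to \<open>x = u\<close>\<close>
    then obtain z zs' where zs: "zs = z # zs'"
      using "3.prems"(3) by (cases zs) auto
    have "x = u" "z = u"
      using "3.prems"(1,2) leaf assms(2) True unfolding zs by (auto simp: doubleton_eq_iff)
    then obtain ys where "walk (W - {l}) {f \<in> F. l \<notin> f} ys" "hd ys = z" "last ys = last (z # zs')"
      using "3.IH"(1) "3.prems" True assms(2) unfolding zs by (auto elim!: meta_impE)
    then show ?thesis
      using \<open>x = u\<close> \<open>z = u\<close> zs by (intro exI[of _ ys]) auto
  qed
qed (auto intro: exI[of _ "[_]"])

lemma connected_in_remove_leaf: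
  assumes leaf: "\<forall>f\<in>T. l \<in> f \<longrightarrow> f = {l, u}" "l \<noteq> u"
    and S: "connected_in T S" "l \<in> S" "S \<noteq> {l}"
  shows "u \<in> S" "connected_in {f \<in> T. l \<notin> f} (S - {l})"
proof -
  let ?TS = "{f \<in> T. f \<subseteq> S}"
  obtain x where "x \<in> S" "x \<noteq> l"
    using S(2,3) by blast
  then obtain xs where xs: "walk S ?TS xs" "hd xs = l" "last xs = x"
    using S(1,2) unfolding connected_in_def connected_graph_def by blast
  then obtain y ys where "xs = l # y # ys"
    using \<open>x \<noteq> l\<close> by (cases xs; cases "tl xs") auto
  then have "{l, y} \<in> T" "y \<in> S"
    using xs(1) by auto
  then show "u \<in> S"
    using leaf by (metis doubleton_eq_iff insertI1)
  show "connected_in {f \<in> T. l \<notin> f} (S - {l})"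
    unfolding connected_in_def connected_graph_def
  proof (intro ballI)
    fix a b assume ab: "a \<in> S - {l}" "b \<in> S - {l}"
    then obtain zs where zs: "walk S ?TS zs" "hd zs = a" "last zs = b"
      using S(1) unfolding connected_in_def connected_graph_def by blast
    have "\<forall>f\<in>?TS. l \<in> f \<longrightarrow> f = {l, u}"
      using leaf(1) by blast
    then obtain ws where ws: "walk (S - {l}) {f \<in> ?TS. l \<notin> f} ws" "hd ws = a" "last ws = b"
      using walk_avoiding_leaf[OF _ leaf(2) zs(1)] zs(2,3) ab by blast
    have "{f \<in> ?TS. l \<notin> f} \<subseteq> {f \<in> {f \<in> T. l \<notin> f}. f \<subseteq> S - {l}}"
      by blast
    then show "\<exists>xs. walk (S - {l}) {f \<in> {f \<in> T. l \<notin> f}. f \<subseteq> S - {l}} xs \<and> hd xs = a \<and> last xs = b"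
      using ws walk_mono[OF ws(1) order_refl] by blast
  qed
qed

lemma tree_remove_leaf:
  assumes tree: "is_tree N T" and "2 \<le> card N"
    and l: "l \<in> N" "l \<noteq> u" "{l, u} \<in> T" and leaf: "\<forall>f\<in>T. l \<in> f \<longrightarrow> f = {l, u}"
  shows "is_tree (N - {l}) {f \<in> T. l \<notin> f}"
proof -
  have sg: "sgraph N T" and ct: "card T + 1 = card N" and con: "connected_graph N T"
    using tree unfolding is_tree_def by auto
  have fin: "finite N" "finite T"
    using sg sgraph_finite_edges unfolding sgraph_def by auto
  have "N \<noteq> {l}"
    using assms(2) by auto
  then have ne: "N - {l} \<noteq> {}"
    using l(1) by blast
  have "sgraph (N - {l}) {f \<in> T. l \<notin> f}"
    unfolding sgraph_def
  proof (intro conjI ballI)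
    fix f assume "f \<in> {f \<in> T. l \<notin> f}"
    then show "\<exists>a b. a \<in> N - {l} \<and> b \<in> N - {l} \<and> a \<noteq> b \<and> f = {a, b}"
      using sg by (auto elim!: sgraph_edgeE)
  qed (use fin in simp)
  moreover have "connected_graph (N - {l}) {f \<in> T. l \<notin> f}"
  proof -
    have "{f \<in> T. f \<subseteq> N} = T" "{f \<in> {f \<in> T. l \<notin> f}. f \<subseteq> N - {l}} = {f \<in> T. l \<notin> f}"
      using sgraph_edge_subset[OF sg] by blast+
    then show ?thesis
      using connected_in_remove_leaf(2)[OF leaf l(2) _ l(1) \<open>N \<noteq> {l}\<close>] con
      unfolding connected_in_def by simp
  qed
  moreover have "card {f \<in> T. l \<notin> f} + 1 = card (N - {l})"
  proof -
    have "{f \<in> T. l \<notin> f} = T - {{l, u}}"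
      using leaf l(3) by blast
    moreover have "card (T - {{l, u}}) = card T - 1" "card (N - {l}) = card N - 1" "card T \<noteq> 0"
      using l(1,3) fin by (auto simp: card_Diff_singleton)
    ultimately show ?thesis
      using ct by simp
  qed
  ultimately show ?thesis
    using ne unfolding is_tree_def by blast
qed

lemma subtree_remove_leaf:
  assumes leaf: "\<forall>f\<in>T. l \<in> f \<longrightarrow> f = {l, u}" "l \<noteq> u"
    and S: "S \<subseteq> N" "S \<noteq> {}" "connected_in T S" "S \<noteq> {l}"
  shows "S - {l} \<subseteq> N - {l}" "S - {l} \<noteq> {}" "connected_in {f \<in> T. l \<notin> f} (S - {l})"
    "l \<in> S \<Longrightarrow> u \<in> S"
proof -
  show "S - {l} \<subseteq> N - {l}"
    using S(1) by blast
  show "S - {l} \<noteq> {}"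
    using S(2,4) by blast
  show "l \<in> S \<Longrightarrow> u \<in> S"
    using connected_in_remove_leaf(1)[OF leaf S(3) _ S(4)] .
  show "connected_in {f \<in> T. l \<notin> f} (S - {l})"
  proof (cases "l \<in> S")
    case True
    show ?thesis
      using connected_in_remove_leaf(2)[OF leaf S(3) True S(4)] .
  next
    case False
    then have "S - {l} = S" "{f \<in> {f \<in> T. l \<notin> f}. f \<subseteq> S} = {f \<in> T. f \<subseteq> S}"
      by blast+
    then show ?thesis
      using S(3) unfolding connected_in_def by simp
  qed
qed

lemma pairwise_meet_remove_leaf:
  assumes "\<forall>S1\<in>F. \<forall>S2\<in>F. S1 \<inter> S2 \<noteq> {}" "\<forall>S\<in>F. l \<in> S \<longrightarrow> u \<in> S" "l \<noteq> u"
  shows "\<forall>S1\<in>(\<lambda>S. S - {l}) ` F. \<forall>S2\<in>(\<lambda>S. S - {l}) ` F. S1 \<inter> S2 \<noteq> {}"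
proof (intro ballI)
  fix S1 S2 assume "S1 \<in> (\<lambda>S. S - {l}) ` F" "S2 \<in> (\<lambda>S. S - {l}) ` F"
  then obtain A1 A2 where A: "A1 \<in> F" "A2 \<in> F" "S1 = A1 - {l}" "S2 = A2 - {l}"
    by blast
  then obtain x where "x \<in> A1" "x \<in> A2"
    using assms(1) by blast
  show "S1 \<inter> S2 \<noteq> {}"
  proof (cases "x = l")
    case True
    then have "u \<in> A1" "u \<in> A2"
      using assms(2) A(1,2) \<open>x \<in> A1\<close> \<open>x \<in> A2\<close> by blast+
    then show ?thesis
      using A(3,4) assms(3) by blast
  next
    case False
    then show ?thesis
      using A(3,4) \<open>x \<in> A1\<close> \<open>x \<in> A2\<close> by blast
  qed
qed

lemma subtrees_Helly:
  assumes "is_tree N T"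
    and "\<forall>S\<in>F. S \<subseteq> N \<and> S \<noteq> {} \<and> connected_in T S"
    and "\<forall>S1\<in>F. \<forall>S2\<in>F. S1 \<inter> S2 \<noteq> {}"
  shows "\<exists>t\<in>N. \<forall>S\<in>F. t \<in> S"
  using assms
proof (induction "card N" arbitrary: N T F rule: less_induct)
  case less
  have fin: "finite N" "N \<noteq> {}"
    using less.prems(1) unfolding is_tree_def sgraph_def by simp_all
  show ?case
  proof (cases "2 \<le> card N")
    case False
    moreover have "card N \<noteq> 0"
      using fin by simp
    ultimately have "card N = 1"
      by linarith
    then obtain t where "N = {t}"
      by (rule card_1_singletonE)
    then show ?thesis
      using less.prems(2) by blast
  next
    case True
    obtain l u where lu: "l \<in> N" "u \<in> N" "l \<noteq> u" "{l, u} \<in> T" "\<forall>f\<in>T. l \<in> f \<longrightarrow> f = {l, u}"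
      using tree_has_leaf[OF less.prems(1) True] by blast
    show ?thesis
    proof (cases "{l} \<in> F")
      case True
      then show ?thesis
        using less.prems(3) lu(1) by blast
    next
      case False
      have shrink: "S - {l} \<subseteq> N - {l}" "S - {l} \<noteq> {}" "connected_in {f \<in> T. l \<notin> f} (S - {l})"
        "l \<in> S \<longrightarrow> u \<in> S" if "S \<in> F" for S
        using subtree_remove_leaf[OF lu(5,3), of S N] less.prems(2) that False by blast+
      have "\<exists>t\<in>N - {l}. \<forall>S\<in>(\<lambda>S. S - {l}) ` F. t \<in> S"
      proof (rule less.hyps)
        show "card (N - {l}) < card N"
          using fin(1) lu(1) by (rule card_Diff1_less)
        show "is_tree (N - {l}) {f \<in> T. l \<notin> f}"
          using tree_remove_leaf[OF less.prems(1) True lu(1,3,4,5)] .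
        show "\<forall>S\<in>(\<lambda>S. S - {l}) ` F. S \<subseteq> N - {l} \<and> S \<noteq> {} \<and> connected_in {f \<in> T. l \<notin> f} S"
          using shrink by auto
        show "\<forall>S1\<in>(\<lambda>S. S - {l}) ` F. \<forall>S2\<in>(\<lambda>S. S - {l}) ` F. S1 \<inter> S2 \<noteq> {}"
          using pairwise_meet_remove_leaf[OF less.prems(3) _ lu(3)] shrink(4) by blast
      qed
      then obtain t where "t \<in> N" "\<forall>S\<in>F. t \<in> S - {l}"
        by auto
      then show ?thesis
        by blast
    qed
  qed
qed

section \<open>A lower bound for treewidth\<close>

lemma tree_decomposition_reachable_along_walk:
  assumes td: "tree_decomposition V E N T B"
  shows "walk V E xs \<Longrightarrow> set xs \<subseteq> X \<Longrightarrow> t1 \<in> N \<Longrightarrow> hd xs \<in> B t1 \<Longrightarrow> t2 \<in> N \<Longrightarrow> last xs \<in> B t2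
    \<Longrightarrow> reachable {t \<in> N. B t \<inter> X \<noteq> {}} {f \<in> T. f \<subseteq> {t \<in> N. B t \<inter> X \<noteq> {}}} t1 t2"
proof (induction xs arbitrary: t1)
  case (Cons x xs)
  let ?S = "{t \<in> N. B t \<inter> X \<noteq> {}}"
  have "x \<in> V" "x \<in> X"
    using Cons.prems(1,2) by (auto simp: walk_def)
  \<comment> \<open>the bags containing \<open>x\<close> form a subtree inside \<open>?S\<close>\<close>
  have x_subtree: "reachable ?S {f \<in> T. f \<subseteq> ?S} t1 t" if "t \<in> N" "x \<in> B t" for t
  proof -
    have "reachable {t \<in> N. x \<in> B t} {f \<in> T. f \<subseteq> {t \<in> N. x \<in> B t}} t1 t"
      using td \<open>x \<in> V\<close> that Cons.prems(3,4)
      unfolding tree_decomposition_def connected_graph_iff_reachable by auto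
    moreover have "{t \<in> N. x \<in> B t} \<subseteq> ?S"
      using \<open>x \<in> X\<close> by auto
    ultimately show ?thesis
      by (rule reachable_mono) (use \<open>x \<in> X\<close> in auto)
  qed
  show ?case
  proof (cases xs)
    case Nil
    then show ?thesis
      using x_subtree Cons.prems(5,6) by simp
  next
    case (Cons y ys)
    then have "{x, y} \<in> E" "walk V E xs"
      using \<open>walk V E (x # xs)\<close> by auto
    then obtain t where "t \<in> N" "{x, y} \<subseteq> B t"
      using td unfolding tree_decomposition_def by blast
    then show ?thesis
      using x_subtree Cons.IH[OF \<open>walk V E xs\<close> _ \<open>t \<in> N\<close>] Cons.prems(2,5,6) \<open>xs = y # ys\<close>
      by (auto intro: reachable_trans)
  qed
qed simp

lemma tree_decomposition_connected_in:
  assumes td: "tree_decomposition V E N T B" and X: "connected_in E X" "X \<subseteq> V"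
  shows "connected_in T {t \<in> N. B t \<inter> X \<noteq> {}}"
  unfolding connected_in_def connected_graph_iff_reachable
proof (intro ballI)
  fix t1 t2 assume t1: "t1 \<in> {t \<in> N. B t \<inter> X \<noteq> {}}" and t2: "t2 \<in> {t \<in> N. B t \<inter> X \<noteq> {}}"
  then obtain x1 x2 where "x1 \<in> B t1 \<inter> X" "x2 \<in> B t2 \<inter> X"
    by blast
  then obtain xs where "walk X {e \<in> E. e \<subseteq> X} xs" "hd xs = x1" "last xs = x2"
    using X(1) unfolding connected_in_def connected_graph_def by blast
  moreover from this have "walk V E xs" "set xs \<subseteq> X"
    using X(2) walk_mono[of X _ xs V E] by (auto simp: walk_def)
  ultimately show "reachable {t \<in> N. B t \<inter> X \<noteq> {}} {f \<in> T. f \<subseteq> {t \<in> N. B t \<inter> X \<noteq> {}}} t1 t2"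
    using tree_decomposition_reachable_along_walk[OF td] t1 t2 \<open>x1 \<in> B t1 \<inter> X\<close> \<open>x2 \<in> B t2 \<inter> X\<close>
    by blast
qed

lemma card_ge_if_meets_disjoint_family:
  assumes "finite A" "disjoint_family_on R {..<M}" "\<forall>i<M. A \<inter> R i \<noteq> {}"
  shows "M \<le> card A"
proof -
  define f where "f i = (SOME x. x \<in> A \<inter> R i)" for i
  have f: "f i \<in> A \<inter> R i" if "i < M" for i
    unfolding f_def by (rule someI_ex) (use assms(3) that in blast)
  have "inj_on f {..<M}"
  proof (rule inj_onI)
    fix i j assume ij: "i \<in> {..<M}" "j \<in> {..<M}" "f i = f j"
    then have "f i \<in> R i" "f i \<in> R j"
      using f[of i] f[of j] by auto
    then show "i = j"
      using assms(2) ij unfolding disjoint_family_on_def by blast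
  qed
  moreover have "f ` {..<M} \<subseteq> A"
    using f by auto
  ultimately show ?thesis
    using assms(1) by (metis card_inj_on_le card_lessThan)
qed

text \<open>
  If the rows \<open>R i\<close> and the columns \<open>C j\<close> of an \<open>M \<times> M\<close> pattern meet pairwise and every
  cross \<open>R i \<union> C j\<close> is connected, then the subtrees of bags meeting the crosses intersect
  pairwise (two crosses share \<open>R i \<inter> C j'\<close>); a common bag meets every cross, hence every row
  or every column.
\<close>

lemma tree_decomposition_bag_meets_crosses:
  assumes td: "tree_decomposition V E N T B"
    and RC: "\<And>i j. i < M \<Longrightarrow> j < M \<Longrightarrow> R i \<inter> C j \<noteq> {}"
    and cross: "\<And>i j. i < M \<Longrightarrow> j < M \<Longrightarrow> connected_in E (R i \<union> C j) \<and> R i \<union> C j \<subseteq> V"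
  shows "\<exists>t\<in>N. \<forall>i<M. \<forall>j<M. B t \<inter> (R i \<union> C j) \<noteq> {}"
proof -
  define S where "S i j = {t \<in> N. B t \<inter> (R i \<union> C j) \<noteq> {}}" for i j
  have meet: "S i j \<inter> S i' j' \<noteq> {}" if ij: "i < M" "j' < M" for i j i' j'
  proof -
    obtain v where v: "v \<in> R i" "v \<in> C j'"
      using RC[OF ij] by blast
    then have "v \<in> V"
      using cross[OF ij] by blast
    then obtain t where "t \<in> N" "v \<in> B t"
      using td unfolding tree_decomposition_def by blast
    then have "t \<in> S i j" "t \<in> S i' j'"
      using v unfolding S_def by blast+
    then show ?thesis
      by blast
  qed
  have "\<exists>t\<in>N. \<forall>X\<in>{S i j | i j. i < M \<and> j < M}. t \<in> X"
  proof (rule subtrees_Helly)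
    show "is_tree N T"
      using td unfolding tree_decomposition_def by blast
    show "\<forall>X\<in>{S i j | i j. i < M \<and> j < M}. X \<subseteq> N \<and> X \<noteq> {} \<and> connected_in T X"
    proof
      fix X assume "X \<in> {S i j | i j. i < M \<and> j < M}"
      then obtain i j where ij: "i < M" "j < M" "X = S i j"
        by blast
      have "S i j \<noteq> {}"
        using meet[OF ij(1,2)] by blast
      moreover have "connected_in T (S i j)"
        unfolding S_def using tree_decomposition_connected_in[OF td] cross[OF ij(1,2)] by blast
      ultimately show "X \<subseteq> N \<and> X \<noteq> {} \<and> connected_in T X"
        unfolding ij(3) by (auto simp: S_def)
    qed
    show "\<forall>X1\<in>{S i j | i j. i < M \<and> j < M}. \<forall>X2\<in>{S i j | i j. i < M \<and> j < M}. X1 \<inter> X2 \<noteq> {}"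
      using meet by blast
  qed
  then obtain t where t: "t \<in> N" "\<forall>X\<in>{S i j | i j. i < M \<and> j < M}. t \<in> X"
    by blast
  have "B t \<inter> (R i \<union> C j) \<noteq> {}" if "i < M" "j < M" for i j
  proof -
    have "t \<in> S i j"
      using t(2) that by blast
    then show ?thesis
      unfolding S_def by blast
  qed
  then show ?thesis
    using t(1) by blast
qed

lemma tree_decomposition_large_bag:
  assumes td: "tree_decomposition V E N T B" and "finite V"
    and RC: "\<And>i j. i < M \<Longrightarrow> j < M \<Longrightarrow> R i \<inter> C j \<noteq> {}"
    and "disjoint_family_on R {..<M}" "disjoint_family_on C {..<M}"
    and cross: "\<And>i j. i < M \<Longrightarrow> j < M \<Longrightarrow> connected_in E (R i \<union> C j) \<and> R i \<union> C j \<subseteq> V"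
  shows "\<exists>t\<in>N. M \<le> card (B t)"
proof -
  from tree_decomposition_bag_meets_crosses[OF td RC cross]
  obtain t where "t \<in> N" and t: "\<forall>i<M. \<forall>j<M. B t \<inter> (R i \<union> C j) \<noteq> {}"
    by (rule bexE)
  have "(\<forall>i<M. B t \<inter> R i \<noteq> {}) \<or> (\<forall>j<M. B t \<inter> C j \<noteq> {})"
  proof (rule ccontr)
    assume "\<not> ?thesis"
    then obtain i j where "i < M" "j < M" "B t \<inter> R i = {}" "B t \<inter> C j = {}"
      by blast
    moreover from this have "B t \<inter> (R i \<union> C j) \<noteq> {}"
      using t by blast
    ultimately show False
      by blast
  qed
  moreover have "finite (B t)"
    using td \<open>t \<in> N\<close> \<open>finite V\<close> unfolding tree_decomposition_def by (meson finite_subset)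
  ultimately have "M \<le> card (B t)"
    using card_ge_if_meets_disjoint_family[of "B t"] assms(4,5) by blast
  then show ?thesis
    using \<open>t \<in> N\<close> by blast
qed

lemma treewidth_ge_if_large_bags:
  assumes sg: "sgraph V E"
    and large: "\<And>N T B. tree_decomposition V E N T B \<Longrightarrow> \<exists>t\<in>N. M \<le> card (B t)"
  shows "M - 1 \<le> treewidth V E"
proof -
  let ?W = "{w. \<exists>N T B. tree_decomposition V E N T B \<and> w = td_width N B}"
  have "is_tree {0::nat} {}"
    unfolding is_tree_def sgraph_def connected_graph_def by (auto intro: exI[of _ "[0]"])
  then have "tree_decomposition V E {0} {} (\<lambda>_. V)"
    using sgraph_edge_subset[OF sg] unfolding tree_decomposition_def connected_graph_def
    by (auto intro: exI[of _ "[0]"])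
  then have "?W \<noteq> {}"
    by blast
  moreover have "?W \<subseteq> {..card V}"
  proof
    fix w assume "w \<in> ?W"
    then obtain N T B where td: "tree_decomposition V E N T B" and w: "w = td_width N B"
      by blast
    have "finite N" "N \<noteq> {}" "\<forall>t\<in>N. card (B t) \<le> card V"
      using td sg unfolding tree_decomposition_def is_tree_def sgraph_def by (auto intro: card_mono)
    then have "Max ((\<lambda>t. card (B t)) ` N) \<le> card V"
      by simp
    then show "w \<in> {..card V}"
      unfolding w td_width_def by simp
  qed
  ultimately have "treewidth V E \<in> ?W"
    unfolding treewidth_def by (meson Min_in finite_atMost finite_subset)
  then obtain N T B where td: "tree_decomposition V E N T B" and "treewidth V E = td_width N B"
    by blast
  moreover obtain t where "t \<in> N" "M \<le> card (B t)"
    using large[OF td] by blast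
  moreover have "finite N"
    using td unfolding tree_decomposition_def is_tree_def sgraph_def by blast
  ultimately show ?thesis
    unfolding td_width_def by (metis (no_types, lifting) Max_ge diff_le_mono finite_imageI image_eqI order_trans)
qed

section \<open>Straight-line drawings\<close>

definition straight_path :: "('a::linorder \<Rightarrow> complex) \<Rightarrow> 'a set \<Rightarrow> real \<Rightarrow> complex" where
  "straight_path pos e = linepath (pos (Min e)) (pos (Max e))"

lemma path_image_straight_path:
  "path_image (straight_path pos {a, b}) = closed_segment (pos a) (pos b)"
  by (cases a b rule: linorder_cases)
    (auto simp: straight_path_def closed_segment_commute min_def max_def)

lemma straight_line_embedding:
  fixes pos :: "'a::linorder \<Rightarrow> complex"
  assumes sg: "sgraph V E" and inj: "inj_on pos V"
    and on_edge: "\<And>e w. e \<in> E \<Longrightarrow> w \<in> V \<Longrightarrow> pos w \<in> path_image (straight_path pos e) \<Longrightarrow> w \<in> e"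
  shows "embedding V E pos (straight_path pos)"
  unfolding embedding_def
proof (intro conjI ballI allI impI)
  fix e assume e: "e \<in> E"
  obtain a b where ab: "a \<in> V" "b \<in> V" "a \<noteq> b" "e = {a, b}"
    using sg e by (rule sgraph_edgeE)
  have ends: "{Min e, Max e} = {a, b}" "Min e \<noteq> Max e"
    using ab(3) unfolding ab(4) by (auto simp: min_def max_def)
  then show "path (straight_path pos e)"
    and "\<And>u v. e = {u, v} \<Longrightarrow>
      {pathstart (straight_path pos e), pathfinish (straight_path pos e)} = {pos u, pos v}"
    unfolding straight_path_def using ab(4) by (auto simp: doubleton_eq_iff)
  fix w assume "w \<in> V"
  show "pos w \<notin> straight_path pos e ` {0<..<1}"
  proof
    assume "pos w \<in> straight_path pos e ` {0<..<1}"
    then obtain t where t: "t \<in> {0<..<1}" "pos w = linepath (pos (Min e)) (pos (Max e)) t"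
      unfolding straight_path_def by blast
    have "Min e \<in> V" "Max e \<in> V"
      using ends(1) ab(1,2) by auto
    then have "pos (Min e) \<noteq> pos (Max e)"
      using inj ends(2) by (auto dest: inj_onD)
    then have w: "pos w \<in> open_segment (pos (Min e)) (pos (Max e))"
      unfolding t(2) using t(1) linepath_in_open_segment by blast
    then have "pos w \<in> path_image (straight_path pos e)"
      unfolding straight_path_def path_image_linepath by (simp add: open_closed_segment)
    then have "w \<in> {Min e, Max e}"
      using on_edge[OF e \<open>w \<in> V\<close>] ends(1) ab(4) by simp
    then show False
      using w by (auto simp: open_segment_def)
  qed
qed (rule inj)

lemma crossing_charged_at_midpoint:
  assumes charged: "\<And>p e f. e \<in> E \<Longrightarrow> f \<in> E \<Longrightarrow> e \<noteq> f \<Longrightarrow> p \<in> path_image (\<gamma> e) \<Longrightarrow>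
      p \<in> path_image (\<gamma> f) \<Longrightarrow> p \<notin> pos ` (e \<union> f) \<Longrightarrow>
      e \<in> G \<and> f \<notin> G \<and> p = mid e \<or> f \<in> G \<and> e \<notin> G \<and> p = mid f"
    and "c \<in> crossings V E pos \<gamma>"
  obtains g h where "snd c = {g, h}" "g \<in> G" "h \<notin> G" "h \<in> E" "fst c = mid g"
    "mid g \<in> path_image (\<gamma> h)" "mid g \<notin> pos ` h"
proof -
  obtain p e f where c: "c = (p, {e, f})" "e \<in> E" "f \<in> E" "e \<noteq> f"
    "p \<in> path_image (\<gamma> e)" "p \<in> path_image (\<gamma> f)" "p \<notin> pos ` (e \<union> f)"
    using assms(2) unfolding crossings_def by blast
  from charged[OF c(2-7)] show ?thesis
  proof
    assume "e \<in> G \<and> f \<notin> G \<and> p = mid e"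
    then show ?thesis
      using that[of e f] c(1,3,6,7) by auto
  next
    assume "f \<in> G \<and> e \<notin> G \<and> p = mid f"
    moreover have "snd c = {f, e}"
      using c(1) by (simp add: insert_commute)
    ultimately show ?thesis
      using that[of f e] c(1,2,5,7) by auto
  qed
qed

text \<open>
  Charging a crossing to its edge in \<open>G\<close> is injective: two crossings charged to \<open>g\<close> both lie
  at \<open>mid g\<close>, so their other edges would cross each other there without involving \<open>G\<close>.
\<close>

lemma one_gap_planar_embedding_if_crossings_at_midpoints:
  assumes emb: "embedding V E pos \<gamma>"
    and charged: "\<And>p e f. e \<in> E \<Longrightarrow> f \<in> E \<Longrightarrow> e \<noteq> f \<Longrightarrow> p \<in> path_image (\<gamma> e) \<Longrightarrow>
      p \<in> path_image (\<gamma> f) \<Longrightarrow> p \<notin> pos ` (e \<union> f) \<Longrightarrow>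
      e \<in> G \<and> f \<notin> G \<and> p = mid e \<or> f \<in> G \<and> e \<notin> G \<and> p = mid f"
  shows "one_gap_planar_embedding V E pos \<gamma>"
proof -
  let ?C = "crossings V E pos \<gamma>"
  define ch where "ch c = (THE g. g \<in> snd c \<and> g \<in> G)" for c :: "complex \<times> 'a set set"
  have ch: "ch c = g" if "snd c = {g, h}" "g \<in> G" "h \<notin> G" for c g h
    unfolding ch_def using that by (intro the_equality) auto
  have "ch c1 = ch c2 \<longrightarrow> c1 = c2" if "c1 \<in> ?C" "c2 \<in> ?C" for c1 c2
  proof
    assume same: "ch c1 = ch c2"
    obtain g1 h1 where c1: "snd c1 = {g1, h1}" "g1 \<in> G" "h1 \<notin> G" "h1 \<in> E" "fst c1 = mid g1"
        "mid g1 \<in> path_image (\<gamma> h1)" "mid g1 \<notin> pos ` h1"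
      using crossing_charged_at_midpoint[OF charged \<open>c1 \<in> ?C\<close>] .
    obtain g2 h2 where c2: "snd c2 = {g2, h2}" "g2 \<in> G" "h2 \<notin> G" "h2 \<in> E" "fst c2 = mid g2"
        "mid g2 \<in> path_image (\<gamma> h2)" "mid g2 \<notin> pos ` h2"
      using crossing_charged_at_midpoint[OF charged \<open>c2 \<in> ?C\<close>] .
    have "g1 = g2"
      using same ch[OF c1(1-3)] ch[OF c2(1-3)] by simp
    moreover have "h1 = h2"
    proof (rule ccontr)
      assume "h1 \<noteq> h2"
      moreover have "mid g1 \<in> path_image (\<gamma> h2)" "mid g1 \<notin> pos ` (h1 \<union> h2)"
        using c1(7) c2(6,7) \<open>g1 = g2\<close> by auto
      ultimately have "h1 \<in> G \<or> h2 \<in> G"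
        using charged[OF c1(4) c2(4) _ c1(6)] by blast
      then show False
        using c1(3) c2(3) by blast
    qed
    ultimately show "c1 = c2"
      using c1(1,5) c2(1,5) by (metis prod.collapse)
  qed
  moreover have "ch c \<in> snd c" if "c \<in> ?C" for c
  proof -
    obtain g h where "snd c = {g, h}" "g \<in> G" "h \<notin> G" "h \<in> E" "fst c = mid g"
        "mid g \<in> path_image (\<gamma> h)" "mid g \<notin> pos ` h"
      using crossing_charged_at_midpoint[OF charged \<open>c \<in> ?C\<close>] .
    then show ?thesis
      using ch by simp
  qed
  ultimately show ?thesis
    using emb unfolding one_gap_planar_embedding_def by (intro conjI exI[of _ ch]) auto
qed

section \<open>Dyadic arithmetic\<close>

lemma not_dvd_between_multiples:
  fixes l t x :: nat
  assumes "l * t < x" "x < l * (t + 1)"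
  shows "\<not> l dvd x"
proof
  assume "l dvd x"
  then obtain c where c: "x = l * c"
    by blast
  then have "l * t < l * c" "l * c < l * (t + 1)"
    using assms by simp_all
  then have "t < c" "c < t + 1"
    by (meson mult_less_cancel1)+
  then show False
    by simp
qed

lemma dvd_between_multiples_cases:
  fixes l t x :: nat
  assumes "l * t \<le> x" "x \<le> l * (t + 1)" "l dvd x"
  shows "x = l * t \<or> x = l * (t + 1)"
  using not_dvd_between_multiples[of l t x] assms by linarith

lemma power_two_times_odd_eq_iff:
  fixes a b i j :: nat
  shows "2 ^ a * (2 * i + 1) = 2 ^ b * (2 * j + 1) \<longleftrightarrow> a = b \<and> i = j"
proof (induction a arbitrary: b)
  case 0
  show ?case
    by (cases b) (auto, presburger)
next
  case (Suc a)
  show ?case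
  proof (cases b)
    case 0
    then show ?thesis
      by simp presburger
  next
    case (Suc b')
    have "2 ^ Suc a * (2 * i + 1) = 2 ^ Suc b' * (2 * j + 1) \<longleftrightarrow>
        2 ^ a * (2 * i + 1) = (2::nat) ^ b' * (2 * j + 1)"
      by (simp only: power_Suc mult.assoc mult_cancel_left) simp
    then show ?thesis
      using Suc.IH Suc by simp
  qed
qed

lemma power_two_dvd_times_odd_iff:
  fixes u a i :: nat
  shows "2 ^ u dvd 2 ^ a * (2 * i + 1) \<longleftrightarrow> u \<le> a"
proof
  assume "2 ^ u dvd 2 ^ a * (2 * i + 1)"
  moreover have "\<not> 2 ^ Suc a dvd 2 ^ a * (2 * i + 1)"
  proof -
    have "2 ^ Suc a dvd 2 ^ a * (2 * i + 1) \<longleftrightarrow> 2 dvd 2 * i + (1::nat)"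
      by (simp only: power_Suc mult.commute[of 2 "2 ^ a"] nat_mult_dvd_cancel_disj) simp
    then show ?thesis
      by simp
  qed
  ultimately show "u \<le> a"
    by (metis dvd_trans le_imp_power_dvd not_less_eq_eq)
qed (simp add: le_imp_power_dvd)

lemma odd_form_of_1_or_3_mod_4:
  fixes i p :: nat
  assumes "i = 1 \<or> i = 3"
  shows "4 * p + i = 2 * (2 * p + i div 2) + 1"
  using assms by auto

text \<open>
  The tree vertices of the construction below: the centres of the H's, whose two coordinates
  have the same 2-adic valuation, and the ends of their horizontal bars.
\<close>

definition htree_point :: "nat \<times> nat \<Rightarrow> bool" where
  "htree_point c \<longleftrightarrow> (\<exists>v p q. c = (2 ^ v * (2 * p + 1), 2 ^ v * (2 * q + 1))) \<or>
     (\<exists>u p q i. (i = 1 \<or> i = 3) \<and> c = (2 ^ u * (4 * p + i), 2 ^ u * (4 * q + 2)))"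

lemma power_two_times_4_plus_2: "2 ^ u * (4 * q + 2) = 2 ^ Suc u * (2 * q + (1::nat))"
  by simp

lemma htree_point_row_dvd:
  assumes "htree_point (a, 2 ^ u * (4 * q + 2))"
  shows "2 ^ u dvd a"
  using assms unfolding htree_point_def
proof (elim disjE[of "\<exists>v p q. _ v p q"] exE conjE)
  fix v p q' assume "(a, 2 ^ u * (4 * q + 2)) = (2 ^ v * (2 * p + 1), 2 ^ v * (2 * q' + 1))"
  then have "a = 2 ^ v * (2 * p + 1)" "2 ^ Suc u * (2 * q + 1) = 2 ^ v * (2 * q' + 1)"
    unfolding power_two_times_4_plus_2 by simp_all
  then have "a = 2 ^ Suc u * (2 * p + 1)"
    unfolding power_two_times_odd_eq_iff by simp
  then show ?thesis
    by (simp add: dvd_mult2)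
next
  fix u' p q' i assume "(a, 2 ^ u * (4 * q + 2)) = (2 ^ u' * (4 * p + i), 2 ^ u' * (4 * q' + 2))"
  then have "a = 2 ^ u' * (4 * p + i)" "2 ^ Suc u * (2 * q + 1) = 2 ^ Suc u' * (2 * q' + 1)"
    unfolding power_two_times_4_plus_2 by simp_all
  then have "a = 2 ^ u * (4 * p + i)"
    unfolding power_two_times_odd_eq_iff by simp
  then show ?thesis
    by simp
qed

lemma htree_point_column_dvd:
  assumes "htree_point (2 ^ u * (2 * p + 1), b)"
  shows "2 ^ u dvd b"
  using assms unfolding htree_point_def
proof (elim disjE[of "\<exists>v p q. _ v p q"] exE conjE)
  fix v p' q assume "(2 ^ u * (2 * p + 1), b) = (2 ^ v * (2 * p' + 1), 2 ^ v * (2 * q + 1))"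
  then have "2 ^ u * (2 * p + 1) = 2 ^ v * (2 * p' + 1)" "b = 2 ^ v * (2 * q + 1)"
    by simp_all
  then have "b = 2 ^ u * (2 * q + 1)"
    unfolding power_two_times_odd_eq_iff by simp
  then show ?thesis
    by simp
next
  fix u' p' q i assume "i = 1 \<or> i = 3"
    and "(2 ^ u * (2 * p + 1), b) = (2 ^ u' * (4 * p' + i), 2 ^ u' * (4 * q + 2))"
  then have "2 ^ u * (2 * p + 1) = 2 ^ u' * (2 * (2 * p' + i div 2) + 1)" "b = 2 ^ u' * (4 * q + 2)"
    unfolding odd_form_of_1_or_3_mod_4[OF \<open>i = 1 \<or> i = 3\<close>] by simp_all
  then have "b = 2 ^ u * (4 * q + 2)"
    unfolding power_two_times_odd_eq_iff by simp
  then show ?thesis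
    by simp
qed

text \<open>
  A horizontal bar of level \<open>u\<close> and a vertical bar of level \<open>w\<close> can only meet at an end of
  the horizontal one: otherwise \<open>w < u\<close>, so the height of the horizontal bar is a multiple
  of \<open>2 ^ w\<close> inside the vertical one, hence one of its ends; but bar ends are not multiples
  of \<open>2 ^ (w + 2)\<close>.
\<close>

lemma htree_bars_meet_at_end:
  fixes a b w p u q t s :: nat
  assumes a: "a = 2 ^ w * (2 * p + 1)" and b: "b = 2 ^ u * (4 * q + 2)"
    and ia: "2 ^ u * t \<le> a" "a \<le> 2 ^ u * (t + 1)"
    and ib: "2 ^ w * s \<le> b" "b \<le> 2 ^ w * (s + 1)" and s: "s mod 4 = 1 \<or> s mod 4 = 2"
  shows "a = 2 ^ u * t \<or> a = 2 ^ u * (t + 1)"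
proof (rule ccontr)
  assume "\<not> ?thesis"
  then have "\<not> 2 ^ u dvd a"
    using dvd_between_multiples_cases[OF ia] by blast
  then have "w < u"
    unfolding a power_two_dvd_times_odd_iff by simp
  define d where "d = u - Suc w"
  have d: "Suc u = w + 2 + d"
    using \<open>w < u\<close> unfolding d_def by simp
  have "b = 2 ^ Suc u * (2 * q + 1)"
    unfolding b power_two_times_4_plus_2 ..
  also have "\<dots> = 2 ^ w * (4 * (2 ^ d * (2 * q + 1)))"
    unfolding d by (simp add: power_add algebra_simps)
  finally have b': "b = 2 ^ w * (4 * (2 ^ d * (2 * q + 1)))" .
  then have "b = 2 ^ w * s \<or> b = 2 ^ w * (s + 1)"
    using dvd_between_multiples_cases[OF ib] by simp
  moreover define c where "c = 2 ^ d * (2 * q + 1)"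
  moreover have "(2::nat) ^ w \<noteq> 0"
    by simp
  ultimately have "4 * c = s \<or> 4 * c = s + 1"
    unfolding b' c_def[symmetric] by (simp only: mult_left_cancel simp_thms)
  then show False
    using s by presburger
qed

section \<open>Drawings on the integer lattice\<close>

definition lattice_point :: "nat \<Rightarrow> nat \<Rightarrow> nat" where
  "lattice_point X Y = prod_encode (X, Y)"

definition lattice_pos :: "nat \<Rightarrow> complex" where
  "lattice_pos v = Complex (fst (prod_decode v)) (snd (prod_decode v))"

lemma lattice_pos_lattice_point [simp]: "lattice_pos (lattice_point X Y) = Complex X Y"
  by (simp add: lattice_point_def lattice_pos_def)

lemma lattice_point_eq_iff [simp]: "lattice_point X Y = lattice_point X' Y' \<longleftrightarrow> X = X' \<and> Y = Y'"
  by (simp add: lattice_point_def)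

lemma inj_lattice_pos: "inj lattice_pos"
proof (rule injI)
  fix v w assume "lattice_pos v = lattice_pos w"
  then have "prod_decode v = prod_decode w"
    unfolding lattice_pos_def by (simp add: prod_eq_iff)
  then show "v = w"
    by (metis prod_decode_inverse)
qed

text \<open>
  Grid vertex \<open>(x, y)\<close> is drawn at \<open>(2x + 1, 2y + 1)\<close> and tree vertex \<open>(a, b)\<close> at
  \<open>(2a, 2b)\<close>: the tree runs along the even lines, between the lines of the grid.
\<close>

abbreviation grid_vertex :: "nat \<Rightarrow> nat \<Rightarrow> nat" where
  "grid_vertex x y \<equiv> lattice_point (2 * x + 1) (2 * y + 1)"

abbreviation tree_vertex :: "nat \<Rightarrow> nat \<Rightarrow> nat" where
  "tree_vertex a b \<equiv> lattice_point (2 * a) (2 * b)"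

lemma Suc_double_neq_double [simp]:
  fixes x a :: nat
  shows "Suc (2 * x) \<noteq> 2 * a" "2 * a \<noteq> Suc (2 * x)"
  by presburger+

abbreviation edge_image :: "nat set \<Rightarrow> complex set" where
  "edge_image e \<equiv> path_image (straight_path lattice_pos e)"

definition edge_midpoint :: "nat set \<Rightarrow> complex" where
  "edge_midpoint e = (lattice_pos (Min e) + lattice_pos (Max e)) / 2"

lemma edge_midpoint_pair: "edge_midpoint {v, w} = (lattice_pos v + lattice_pos w) / 2"
  by (cases v w rule: linorder_cases) (simp_all add: edge_midpoint_def add.commute)

lemma mem_edge_image_horizontal:
  assumes "X1 \<le> X2"
  shows "z \<in> edge_image {lattice_point X1 Y, lattice_point X2 Y} \<longleftrightarrow>
    Im z = Y \<and> real X1 \<le> Re z \<and> Re z \<le> real X2"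
  using assms by (simp add: path_image_straight_path closed_segment_same_Im closed_segment_eq_real_ivl)

lemma mem_edge_image_vertical:
  assumes "Y1 \<le> Y2"
  shows "z \<in> edge_image {lattice_point X Y1, lattice_point X Y2} \<longleftrightarrow>
    Re z = X \<and> real Y1 \<le> Im z \<and> Im z \<le> real Y2"
  using assms by (simp add: path_image_straight_path closed_segment_same_Re closed_segment_eq_real_ivl)

section \<open>The edge shapes and how they can cross\<close>

definition grid_hedge :: "nat set \<Rightarrow> bool" where
  "grid_hedge e \<longleftrightarrow> (\<exists>x y. e = {grid_vertex x y, grid_vertex (Suc x) y})"

definition grid_vedge :: "nat set \<Rightarrow> bool" where
  "grid_vedge e \<longleftrightarrow> (\<exists>x y. e = {grid_vertex x y, grid_vertex x (Suc y)})"

text \<open>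
  Halves of the bars of the H's: the horizontal bar of the H centred at
  \<open>(2 ^ u * (4 * p + 2), 2 ^ u * (4 * q + 2))\<close> has the halves \<open>t = 4 * p + 1\<close> and
  \<open>t = 4 * p + 2\<close>, and similarly for its two vertical bars.
\<close>

definition tree_hedge :: "nat set \<Rightarrow> bool" where
  "tree_hedge e \<longleftrightarrow> (\<exists>u t q. (t mod 4 = 1 \<or> t mod 4 = 2) \<and>
     e = {tree_vertex (2 ^ u * t) (2 ^ u * (4 * q + 2)), tree_vertex (2 ^ u * (t + 1)) (2 ^ u * (4 * q + 2))})"

definition tree_vedge :: "nat set \<Rightarrow> bool" where
  "tree_vedge e \<longleftrightarrow> (\<exists>u p s. (s mod 4 = 1 \<or> s mod 4 = 2) \<and>
     e = {tree_vertex (2 ^ u * (2 * p + 1)) (2 ^ u * s), tree_vertex (2 ^ u * (2 * p + 1)) (2 ^ u * (s + 1))})"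

definition spoke :: "nat set \<Rightarrow> bool" where
  "spoke e \<longleftrightarrow> (\<exists>a b x y. (x = a \<or> Suc x = a) \<and> (y = b \<or> Suc y = b) \<and>
     e = {tree_vertex a b, grid_vertex x y})"

definition grid_edge :: "nat set \<Rightarrow> bool" where
  "grid_edge e \<longleftrightarrow> grid_hedge e \<or> grid_vedge e"

definition tree_edge :: "nat set \<Rightarrow> bool" where
  "tree_edge e \<longleftrightarrow> tree_hedge e \<or> tree_vedge e"

definition lattice_edge :: "nat set \<Rightarrow> bool" where
  "lattice_edge e \<longleftrightarrow> grid_edge e \<or> tree_edge e \<or> spoke e"

lemma tree_edge_not_grid_edge: "tree_edge e \<Longrightarrow> \<not> grid_edge e"
  unfolding tree_edge_def grid_edge_def tree_hedge_def tree_vedge_def grid_hedge_def grid_vedge_def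
  by (auto simp: doubleton_eq_iff)

lemma grid_hedgeE:
  assumes "grid_hedge e" "z \<in> edge_image e"
  obtains x y where "e = {grid_vertex x y, grid_vertex (Suc x) y}"
    "Im z = real (2 * y + 1)" "real (2 * x + 1) \<le> Re z" "Re z \<le> real (2 * x + 3)"
proof -
  obtain x y where e: "e = {grid_vertex x y, grid_vertex (Suc x) y}"
    using assms(1) unfolding grid_hedge_def by blast
  then show ?thesis
    using that assms(2) mem_edge_image_horizontal[of "2 * x + 1" "2 * Suc x + 1" z "2 * y + 1"] by simp
qed

lemma grid_vedgeE:
  assumes "grid_vedge e" "z \<in> edge_image e"
  obtains x y where "e = {grid_vertex x y, grid_vertex x (Suc y)}"
    "Re z = real (2 * x + 1)" "real (2 * y + 1) \<le> Im z" "Im z \<le> real (2 * y + 3)"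
proof -
  obtain x y where e: "e = {grid_vertex x y, grid_vertex x (Suc y)}"
    using assms(1) unfolding grid_vedge_def by blast
  then show ?thesis
    using that assms(2) mem_edge_image_vertical[of "2 * y + 1" "2 * Suc y + 1" z "2 * x + 1"] by simp
qed

lemma tree_hedgeE:
  assumes "tree_hedge e" "z \<in> edge_image e"
  obtains u t q where "t mod 4 = 1 \<or> t mod 4 = 2"
    "e = {tree_vertex (2 ^ u * t) (2 ^ u * (4 * q + 2)), tree_vertex (2 ^ u * (t + 1)) (2 ^ u * (4 * q + 2))}"
    "Im z = real (2 * (2 ^ u * (4 * q + 2)))"
    "real (2 * (2 ^ u * t)) \<le> Re z" "Re z \<le> real (2 * (2 ^ u * (t + 1)))"
proof -
  obtain u t q where tq: "t mod 4 = 1 \<or> t mod 4 = 2"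
    "e = {tree_vertex (2 ^ u * t) (2 ^ u * (4 * q + 2)), tree_vertex (2 ^ u * (t + 1)) (2 ^ u * (4 * q + 2))}"
    using assms(1) unfolding tree_hedge_def by blast
  moreover have "2 * (2 ^ u * t) \<le> 2 * (2 ^ u * (t + (1::nat)))"
    by simp
  ultimately show ?thesis
    using that assms(2) mem_edge_image_horizontal by blast
qed

lemma tree_vedgeE:
  assumes "tree_vedge e" "z \<in> edge_image e"
  obtains u p s where "s mod 4 = 1 \<or> s mod 4 = 2"
    "e = {tree_vertex (2 ^ u * (2 * p + 1)) (2 ^ u * s), tree_vertex (2 ^ u * (2 * p + 1)) (2 ^ u * (s + 1))}"
    "Re z = real (2 * (2 ^ u * (2 * p + 1)))"
    "real (2 * (2 ^ u * s)) \<le> Im z" "Im z \<le> real (2 * (2 ^ u * (s + 1)))"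
proof -
  obtain u p s where ps: "s mod 4 = 1 \<or> s mod 4 = 2"
    "e = {tree_vertex (2 ^ u * (2 * p + 1)) (2 ^ u * s), tree_vertex (2 ^ u * (2 * p + 1)) (2 ^ u * (s + 1))}"
    using assms(1) unfolding tree_vedge_def by blast
  moreover have "2 * (2 ^ u * s) \<le> 2 * (2 ^ u * (s + (1::nat)))"
    by simp
  ultimately show ?thesis
    using that assms(2) mem_edge_image_vertical by blast
qed

lemma aligned_intervals_meet_at_end:
  fixes r :: real and c l t t' :: nat
  assumes "t \<noteq> t'" "real (c + l * t) \<le> r" "r \<le> real (c + l * (t + 1))"
    "real (c + l * t') \<le> r" "r \<le> real (c + l * (t' + 1))"
  shows "r = real (c + l * t) \<or> r = real (c + l * (t + 1))"
proof -
  consider "t + 1 \<le> t'" | "t' + 1 \<le> t"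
    using assms(1) by linarith
  then show ?thesis
  proof cases
    case 1
    then have "l * (t + 1) \<le> l * t'"
      by (rule mult_le_mono2)
    then have "c + l * (t + 1) \<le> c + l * t'"
      by (rule add_left_mono)
    then have "real (c + l * (t + 1)) \<le> real (c + l * t')"
      by (simp only: of_nat_le_iff)
    then show ?thesis
      using assms by linarith
  next
    case 2
    then have "l * (t' + 1) \<le> l * t"
      by (rule mult_le_mono2)
    then have "c + l * (t' + 1) \<le> c + l * t"
      by (rule add_left_mono)
    then have "real (c + l * (t' + 1)) \<le> real (c + l * t)"
      by (simp only: of_nat_le_iff)
    then show ?thesis
      using assms by linarith
  qed
qed

lemma grid_hedges_meet_at_end:
  assumes "grid_hedge e" "grid_hedge f" "e \<noteq> f" "z \<in> edge_image e" "z \<in> edge_image f"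
  shows "z \<in> lattice_pos ` e"
proof -
  obtain x y where e: "e = {grid_vertex x y, grid_vertex (Suc x) y}"
    "Im z = real (2 * y + 1)" "real (2 * x + 1) \<le> Re z" "Re z \<le> real (2 * x + 3)"
    using assms(1,4) by (rule grid_hedgeE)
  obtain x' y' where f: "f = {grid_vertex x' y', grid_vertex (Suc x') y'}"
    "Im z = real (2 * y' + 1)" "real (2 * x' + 1) \<le> Re z" "Re z \<le> real (2 * x' + 3)"
    using assms(2,5) by (rule grid_hedgeE)
  have "y' = y"
    using e(2) f(2) by simp
  then have "x \<noteq> x'"
    using assms(3) e(1) f(1) by auto
  then have "Re z = real (1 + 2 * x) \<or> Re z = real (1 + 2 * (x + 1))"
    using aligned_intervals_meet_at_end[of x x' 1 2 "Re z"] e(3,4) f(3,4) by simp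
  then have "z = lattice_pos (grid_vertex x y) \<or> z = lattice_pos (grid_vertex (Suc x) y)"
    using e(2) by (auto simp: complex_eq_iff)
  then show ?thesis
    using e(1) by blast
qed

lemma grid_vedges_meet_at_end:
  assumes "grid_vedge e" "grid_vedge f" "e \<noteq> f" "z \<in> edge_image e" "z \<in> edge_image f"
  shows "z \<in> lattice_pos ` e"
proof -
  obtain x y where e: "e = {grid_vertex x y, grid_vertex x (Suc y)}"
    "Re z = real (2 * x + 1)" "real (2 * y + 1) \<le> Im z" "Im z \<le> real (2 * y + 3)"
    using assms(1,4) by (rule grid_vedgeE)
  obtain x' y' where f: "f = {grid_vertex x' y', grid_vertex x' (Suc y')}"
    "Re z = real (2 * x' + 1)" "real (2 * y' + 1) \<le> Im z" "Im z \<le> real (2 * y' + 3)"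
    using assms(2,5) by (rule grid_vedgeE)
  have "x' = x"
    using e(2) f(2) by simp
  then have "y \<noteq> y'"
    using assms(3) e(1) f(1) by auto
  then have "Im z = real (1 + 2 * y) \<or> Im z = real (1 + 2 * (y + 1))"
    using aligned_intervals_meet_at_end[of y y' 1 2 "Im z"] e(3,4) f(3,4) by simp
  then have "z = lattice_pos (grid_vertex x y) \<or> z = lattice_pos (grid_vertex x (Suc y))"
    using e(2) by (auto simp: complex_eq_iff)
  then show ?thesis
    using e(1) by blast
qed

lemma tree_hedges_meet_at_end:
  assumes "tree_hedge e" "tree_hedge f" "e \<noteq> f" "z \<in> edge_image e" "z \<in> edge_image f"
  shows "z \<in> lattice_pos ` e"
proof -
  obtain u t q where e: "e = {tree_vertex (2 ^ u * t) (2 ^ u * (4 * q + 2)), tree_vertex (2 ^ u * (t + 1)) (2 ^ u * (4 * q + 2))}"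
    "Im z = real (2 * (2 ^ u * (4 * q + 2)))"
    "real (2 * (2 ^ u * t)) \<le> Re z" "Re z \<le> real (2 * (2 ^ u * (t + 1)))"
    using assms(1,4) by (rule tree_hedgeE)
  obtain u' t' q' where f: "f = {tree_vertex (2 ^ u' * t') (2 ^ u' * (4 * q' + 2)), tree_vertex (2 ^ u' * (t' + 1)) (2 ^ u' * (4 * q' + 2))}"
    "Im z = real (2 * (2 ^ u' * (4 * q' + 2)))"
    "real (2 * (2 ^ u' * t')) \<le> Re z" "Re z \<le> real (2 * (2 ^ u' * (t' + 1)))"
    using assms(2,5) by (rule tree_hedgeE)
  have "real (2 * (2 ^ u * (4 * q + 2))) = real (2 * (2 ^ u' * (4 * q' + 2)))"
    by (simp only: flip: e(2) f(2))
  then have "2 ^ Suc u * (2 * q + 1) = 2 ^ Suc u' * (2 * q' + (1::nat))"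
    unfolding of_nat_eq_iff power_two_times_4_plus_2 by simp
  then have "u' = u" "q' = q"
    unfolding power_two_times_odd_eq_iff by simp_all
  then have "t \<noteq> t'"
    using assms(3) e(1) f(1) by auto
  then have "Re z = real (0 + 2 * 2 ^ u * t) \<or> Re z = real (0 + 2 * 2 ^ u * (t + 1))"
    using aligned_intervals_meet_at_end[of t t' 0 "2 * 2 ^ u" "Re z"] e(3,4) f(3,4) \<open>u' = u\<close>
    by (simp add: mult.assoc)
  then have "z = lattice_pos (tree_vertex (2 ^ u * t) (2 ^ u * (4 * q + 2))) \<or>
      z = lattice_pos (tree_vertex (2 ^ u * (t + 1)) (2 ^ u * (4 * q + 2)))"
    using e(2) by (auto simp: complex_eq_iff mult.assoc)
  then show ?thesis
    using e(1) by blast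
qed

lemma tree_vedges_meet_at_end:
  assumes "tree_vedge e" "tree_vedge f" "e \<noteq> f" "z \<in> edge_image e" "z \<in> edge_image f"
  shows "z \<in> lattice_pos ` e"
proof -
  obtain u p s where e: "e = {tree_vertex (2 ^ u * (2 * p + 1)) (2 ^ u * s), tree_vertex (2 ^ u * (2 * p + 1)) (2 ^ u * (s + 1))}"
    "Re z = real (2 * (2 ^ u * (2 * p + 1)))"
    "real (2 * (2 ^ u * s)) \<le> Im z" "Im z \<le> real (2 * (2 ^ u * (s + 1)))"
    using assms(1,4) by (rule tree_vedgeE)
  obtain u' p' s' where f: "f = {tree_vertex (2 ^ u' * (2 * p' + 1)) (2 ^ u' * s'), tree_vertex (2 ^ u' * (2 * p' + 1)) (2 ^ u' * (s' + 1))}"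
    "Re z = real (2 * (2 ^ u' * (2 * p' + 1)))"
    "real (2 * (2 ^ u' * s')) \<le> Im z" "Im z \<le> real (2 * (2 ^ u' * (s' + 1)))"
    using assms(2,5) by (rule tree_vedgeE)
  have "real (2 * (2 ^ u * (2 * p + 1))) = real (2 * (2 ^ u' * (2 * p' + 1)))"
    by (simp only: flip: e(2) f(2))
  then have "2 ^ u * (2 * p + 1) = 2 ^ u' * (2 * p' + (1::nat))"
    unfolding of_nat_eq_iff by simp
  then have "u' = u" "p' = p"
    unfolding power_two_times_odd_eq_iff by simp_all
  then have "s \<noteq> s'"
    using assms(3) e(1) f(1) by auto
  then have "Im z = real (0 + 2 * 2 ^ u * s) \<or> Im z = real (0 + 2 * 2 ^ u * (s + 1))"
    using aligned_intervals_meet_at_end[of s s' 0 "2 * 2 ^ u" "Im z"] e(3,4) f(3,4) \<open>u' = u\<close>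
    by (simp add: mult.assoc)
  then have "z = lattice_pos (tree_vertex (2 ^ u * (2 * p + 1)) (2 ^ u * s)) \<or>
      z = lattice_pos (tree_vertex (2 ^ u * (2 * p + 1)) (2 ^ u * (s + 1)))"
    using e(2) by (auto simp: complex_eq_iff mult.assoc)
  then show ?thesis
    using e(1) by blast
qed

lemma odd_real_neq_even_real [simp]:
  fixes y b :: nat
  shows "real (2 * y + 1) \<noteq> real (2 * b)"
  by (simp only: of_nat_eq_iff) simp

lemma grid_hedge_tree_hedge_disjoint:
  assumes "grid_hedge e" "tree_hedge f" "z \<in> edge_image e" "z \<in> edge_image f"
  shows False
proof -
  obtain x y where "e = {grid_vertex x y, grid_vertex (Suc x) y}"
    "Im z = real (2 * y + 1)" "real (2 * x + 1) \<le> Re z" "Re z \<le> real (2 * x + 3)"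
    using assms(1,3) by (rule grid_hedgeE)
  moreover obtain u t q where "t mod 4 = 1 \<or> t mod 4 = 2"
    "f = {tree_vertex (2 ^ u * t) (2 ^ u * (4 * q + 2)), tree_vertex (2 ^ u * (t + 1)) (2 ^ u * (4 * q + 2))}"
    "Im z = real (2 * (2 ^ u * (4 * q + 2)))"
    "real (2 * (2 ^ u * t)) \<le> Re z" "Re z \<le> real (2 * (2 ^ u * (t + 1)))"
    using assms(2,4) by (rule tree_hedgeE)
  ultimately show False
    using odd_real_neq_even_real[of y "2 ^ u * (4 * q + 2)"] by simp
qed

lemma grid_vedge_tree_vedge_disjoint:
  assumes "grid_vedge e" "tree_vedge f" "z \<in> edge_image e" "z \<in> edge_image f"
  shows False
proof -
  obtain x y where "e = {grid_vertex x y, grid_vertex x (Suc y)}"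
    "Re z = real (2 * x + 1)" "real (2 * y + 1) \<le> Im z" "Im z \<le> real (2 * y + 3)"
    using assms(1,3) by (rule grid_vedgeE)
  moreover obtain u p s where "s mod 4 = 1 \<or> s mod 4 = 2"
    "f = {tree_vertex (2 ^ u * (2 * p + 1)) (2 ^ u * s), tree_vertex (2 ^ u * (2 * p + 1)) (2 ^ u * (s + 1))}"
    "Re z = real (2 * (2 ^ u * (2 * p + 1)))"
    "real (2 * (2 ^ u * s)) \<le> Im z" "Im z \<le> real (2 * (2 ^ u * (s + 1)))"
    using assms(2,4) by (rule tree_vedgeE)
  ultimately show False
    using odd_real_neq_even_real[of x "2 ^ u * (2 * p + 1)"] by simp
qed

lemma horizontal_edges_meet_at_end:
  assumes "grid_hedge e \<or> tree_hedge e" "grid_hedge f \<or> tree_hedge f" "e \<noteq> f"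
    "z \<in> edge_image e" "z \<in> edge_image f"
  shows "z \<in> lattice_pos ` (e \<union> f)"
  using assms grid_hedges_meet_at_end tree_hedges_meet_at_end grid_hedge_tree_hedge_disjoint
  by (metis UnI1 image_Un)

lemma vertical_edges_meet_at_end:
  assumes "grid_vedge e \<or> tree_vedge e" "grid_vedge f \<or> tree_vedge f" "e \<noteq> f"
    "z \<in> edge_image e" "z \<in> edge_image f"
  shows "z \<in> lattice_pos ` (e \<union> f)"
  using assms grid_vedges_meet_at_end tree_vedges_meet_at_end grid_vedge_tree_vedge_disjoint
  by (metis UnI1 image_Un)

lemma odd_between_consecutive_odds:
  fixes x k :: nat
  assumes "real (2 * x + 1) \<le> real (2 * k + 1)" "real (2 * k + 1) \<le> real (2 * x + 3)"
  shows "k = x \<or> k = Suc x"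
  using assms unfolding of_nat_le_iff by linarith

lemma even_between_consecutive_odds:
  fixes x k :: nat
  assumes "real (2 * x + 1) \<le> real (2 * k)" "real (2 * k) \<le> real (2 * x + 3)"
  shows "k = Suc x"
  using assms unfolding of_nat_le_iff by linarith

lemma grid_hedge_grid_vedge_meet_at_end:
  assumes "grid_hedge e" "grid_vedge f" "z \<in> edge_image e" "z \<in> edge_image f"
  shows "z \<in> lattice_pos ` e"
proof -
  obtain x y where e: "e = {grid_vertex x y, grid_vertex (Suc x) y}"
    "Im z = real (2 * y + 1)" "real (2 * x + 1) \<le> Re z" "Re z \<le> real (2 * x + 3)"
    using assms(1,3) by (rule grid_hedgeE)
  obtain x' y' where f: "f = {grid_vertex x' y', grid_vertex x' (Suc y')}"
    "Re z = real (2 * x' + 1)" "real (2 * y' + 1) \<le> Im z" "Im z \<le> real (2 * y' + 3)"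
    using assms(2,4) by (rule grid_vedgeE)
  have "x' = x \<or> x' = Suc x"
    using e(3,4) f(2) by (intro odd_between_consecutive_odds) simp_all
  then show ?thesis
    using e(1,2) f(2) by (auto simp: complex_eq_iff)
qed

lemma grid_hedge_tree_vedge_cross_at_midpoint:
  assumes "grid_hedge e" "tree_vedge f" "z \<in> edge_image e" "z \<in> edge_image f"
  shows "z = edge_midpoint e"
proof -
  obtain x y where e: "e = {grid_vertex x y, grid_vertex (Suc x) y}"
    "Im z = real (2 * y + 1)" "real (2 * x + 1) \<le> Re z" "Re z \<le> real (2 * x + 3)"
    using assms(1,3) by (rule grid_hedgeE)
  obtain u p s where f: "Re z = real (2 * (2 ^ u * (2 * p + 1)))"
    using assms(2,4) by (auto elim: tree_vedgeE)
  have "2 ^ u * (2 * p + 1) = Suc x"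
    using e(3,4) f by (intro even_between_consecutive_odds) simp_all
  then have "Re z = 2 * real x + 2"
    using f by simp
  then show ?thesis
    using e(1,2) by (simp add: edge_midpoint_pair complex_eq_iff)
qed

lemma tree_hedge_grid_vedge_cross_at_midpoint:
  assumes "tree_hedge e" "grid_vedge f" "z \<in> edge_image e" "z \<in> edge_image f"
  shows "z = edge_midpoint f"
proof -
  obtain u t q where e: "Im z = real (2 * (2 ^ u * (4 * q + 2)))"
    using assms(1,3) by (auto elim: tree_hedgeE)
  obtain x y where f: "f = {grid_vertex x y, grid_vertex x (Suc y)}"
    "Re z = real (2 * x + 1)" "real (2 * y + 1) \<le> Im z" "Im z \<le> real (2 * y + 3)"
    using assms(2,4) by (rule grid_vedgeE)
  have "2 ^ u * (4 * q + 2) = Suc y"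
    using f(3,4) e by (intro even_between_consecutive_odds) simp_all
  then have "Im z = 2 * real y + 2"
    using e by simp
  then show ?thesis
    using f(1,2) by (simp add: edge_midpoint_pair complex_eq_iff)
qed

lemma tree_hedge_tree_vedge_meet_at_end:
  assumes "tree_hedge e" "tree_vedge f" "z \<in> edge_image e" "z \<in> edge_image f"
  shows "z \<in> lattice_pos ` e"
proof -
  obtain u t q where e: "t mod 4 = 1 \<or> t mod 4 = 2"
    "e = {tree_vertex (2 ^ u * t) (2 ^ u * (4 * q + 2)), tree_vertex (2 ^ u * (t + 1)) (2 ^ u * (4 * q + 2))}"
    "Im z = real (2 * (2 ^ u * (4 * q + 2)))"
    "real (2 * (2 ^ u * t)) \<le> Re z" "Re z \<le> real (2 * (2 ^ u * (t + 1)))"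
    using assms(1,3) by (rule tree_hedgeE)
  obtain w p s where f: "s mod 4 = 1 \<or> s mod 4 = 2"
    "f = {tree_vertex (2 ^ w * (2 * p + 1)) (2 ^ w * s), tree_vertex (2 ^ w * (2 * p + 1)) (2 ^ w * (s + 1))}"
    "Re z = real (2 * (2 ^ w * (2 * p + 1)))"
    "real (2 * (2 ^ w * s)) \<le> Im z" "Im z \<le> real (2 * (2 ^ w * (s + 1)))"
    using assms(2,4) by (rule tree_vedgeE)
  have "real (2 * (2 ^ u * t)) \<le> real (2 * (2 ^ w * (2 * p + 1)))"
    "real (2 * (2 ^ w * (2 * p + 1))) \<le> real (2 * (2 ^ u * (t + 1)))"
    "real (2 * (2 ^ w * s)) \<le> real (2 * (2 ^ u * (4 * q + 2)))"
    "real (2 * (2 ^ u * (4 * q + 2))) \<le> real (2 * (2 ^ w * (s + 1)))"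
    using e(3-5) f(3-5) by linarith+
  then have "2 ^ u * t \<le> 2 ^ w * (2 * p + 1)" "2 ^ w * (2 * p + 1) \<le> 2 ^ u * (t + 1)"
    "2 ^ w * s \<le> 2 ^ u * (4 * q + 2)" "2 ^ u * (4 * q + 2) \<le> 2 ^ w * (s + 1)"
    unfolding of_nat_le_iff by simp_all
  then have "2 ^ w * (2 * p + 1) = 2 ^ u * t \<or> 2 ^ w * (2 * p + 1) = 2 ^ u * (t + 1)"
    using htree_bars_meet_at_end[OF refl refl _ _ _ _ f(1)] by blast
  then have "Re z = real (2 * (2 ^ u * t)) \<or> Re z = real (2 * (2 ^ u * (t + 1)))"
    unfolding f(3) by (elim disjE) (simp_all only: simp_thms)
  then show ?thesis
    using e(2,3) by (auto simp only: complex_eq_iff lattice_pos_lattice_point complex.sel image_insert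
        insert_iff)
qed

lemma horizontal_vertical_crossing:
  assumes "grid_hedge e \<or> tree_hedge e" "grid_vedge f \<or> tree_vedge f"
    "z \<in> edge_image e" "z \<in> edge_image f" "z \<notin> lattice_pos ` (e \<union> f)"
  shows "grid_edge e \<and> tree_edge f \<and> z = edge_midpoint e \<or> grid_edge f \<and> tree_edge e \<and> z = edge_midpoint f"
  using assms grid_hedge_grid_vedge_meet_at_end grid_hedge_tree_vedge_cross_at_midpoint
    tree_hedge_grid_vedge_cross_at_midpoint tree_hedge_tree_vedge_meet_at_end
  unfolding grid_edge_def tree_edge_def by (metis UnCI image_Un)

lemma spokeE:
  assumes "spoke e" "z \<in> edge_image e"
  obtains a b x y r \<sigma> \<tau> where "e = {tree_vertex a b, grid_vertex x y}" "0 \<le> r" "r \<le> 1"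
    "\<bar>\<sigma>\<bar> = 1" "\<bar>\<tau>\<bar> = 1" "Re z = 2 * real a + r * \<sigma>" "Im z = 2 * real b + r * \<tau>"
    "real (2 * x + 1) = 2 * real a + \<sigma>" "real (2 * y + 1) = 2 * real b + \<tau>"
proof -
  obtain a b x y where ab: "x = a \<or> Suc x = a" "y = b \<or> Suc y = b" "e = {tree_vertex a b, grid_vertex x y}"
    using assms(1) unfolding spoke_def by blast
  then have "z \<in> closed_segment (Complex (2 * real a) (2 * real b)) (Complex (1 + 2 * real x) (1 + 2 * real y))"
    using assms(2) by (simp add: path_image_straight_path)
  then obtain r where r: "0 \<le> r" "r \<le> 1"
    "z = Complex (2 * real a) (2 * real b) + r *\<^sub>R (Complex (1 + 2 * real x) (1 + 2 * real y) - Complex (2 * real a) (2 * real b))"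
    unfolding closed_segment_def by (auto simp: algebra_simps)
  show ?thesis
    using ab r by (intro that[of a b x y r "real (2 * x + 1) - 2 * real a" "real (2 * y + 1) - 2 * real b"]) auto
qed

lemma spoke_meets_lattice_line_at_end:
  assumes "spoke e" "z \<in> edge_image e" "Re z = real N \<or> Im z = real N"
  shows "z \<in> lattice_pos ` e"
proof -
  obtain a b x y r \<sigma> \<tau> where s: "e = {tree_vertex a b, grid_vertex x y}" "0 \<le> r" "r \<le> 1"
    "\<bar>\<sigma>\<bar> = 1" "\<bar>\<tau>\<bar> = 1" "Re z = 2 * real a + r * \<sigma>" "Im z = 2 * real b + r * \<tau>"
    "real (2 * x + 1) = 2 * real a + \<sigma>" "real (2 * y + 1) = 2 * real b + \<tau>"
    using assms(1,2) by (rule spokeE)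
  have "r * \<sigma> = of_int (int N - 2 * int a) \<or> r * \<tau> = of_int (int N - 2 * int b)"
    using assms(3) s(6,7) by auto
  then have "r = of_int (int N - 2 * int a) \<or> r = - of_int (int N - 2 * int a) \<or>
      r = of_int (int N - 2 * int b) \<or> r = - of_int (int N - 2 * int b)"
    using s(4,5) by (auto simp: abs_if split: if_splits)
  then obtain k :: int where "r = of_int k"
    by (metis of_int_minus)
  then have "r = 0 \<or> r = 1"
    using s(2,3) by (cases "k \<le> 0") auto
  then have "z = lattice_pos (tree_vertex a b) \<or> z = lattice_pos (grid_vertex x y)"
    using s(6-9) by (auto simp: complex_eq_iff)
  then show ?thesis
    using s(1) by blast
qed

lemma nat_eq_if_double_dist_less_two:
  fixes a a' :: nat
  assumes "\<bar>2 * real a - 2 * real a'\<bar> < 2"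
  shows "a = a'"
proof (rule ccontr)
  assume "a \<noteq> a'"
  then have "real a + 1 \<le> real a' \<or> real a' + 1 \<le> real a"
    by (cases "a < a'") (simp_all add: nat_neq_iff flip: of_nat_Suc)
  then show False
    using assms by linarith
qed

lemma spokes_meet_at_end:
  assumes "spoke e" "spoke f" "e \<noteq> f" "z \<in> edge_image e" "z \<in> edge_image f"
  shows "z \<in> lattice_pos ` (e \<union> f)"
proof (rule ccontr)
  assume z: "z \<notin> lattice_pos ` (e \<union> f)"
  obtain a b x y r \<sigma> \<tau> where s: "e = {tree_vertex a b, grid_vertex x y}" "0 \<le> r" "r \<le> 1"
    "\<bar>\<sigma>\<bar> = 1" "\<bar>\<tau>\<bar> = 1" "Re z = 2 * real a + r * \<sigma>" "Im z = 2 * real b + r * \<tau>"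
    "real (2 * x + 1) = 2 * real a + \<sigma>" "real (2 * y + 1) = 2 * real b + \<tau>"
    using assms(1,4) by (rule spokeE)
  obtain a' b' x' y' r' \<sigma>' \<tau>' where s': "f = {tree_vertex a' b', grid_vertex x' y'}" "0 \<le> r'" "r' \<le> 1"
    "\<bar>\<sigma>'\<bar> = 1" "\<bar>\<tau>'\<bar> = 1" "Re z = 2 * real a' + r' * \<sigma>'" "Im z = 2 * real b' + r' * \<tau>'"
    "real (2 * x' + 1) = 2 * real a' + \<sigma>'" "real (2 * y' + 1) = 2 * real b' + \<tau>'"
    using assms(2,5) by (rule spokeE)
  \<comment> \<open>an interior point of a spoke lies strictly inside a unit square of the lattice,
    and that square determines the spoke\<close>
  have ends: "z \<noteq> lattice_pos (tree_vertex a b)" "z \<noteq> lattice_pos (grid_vertex x y)"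
    "z \<noteq> lattice_pos (tree_vertex a' b')" "z \<noteq> lattice_pos (grid_vertex x' y')"
    using z s(1) s'(1) by auto
  have "r \<noteq> 0" "r' \<noteq> 0"
    using ends(1) s(6,7) ends(3) s'(6,7) by (auto simp: complex_eq_iff)
  moreover have "r \<noteq> 1" "r' \<noteq> 1"
    using ends(2) s(6-9) ends(4) s'(6-9) by (auto simp: complex_eq_iff)
  ultimately have r: "0 < r" "r < 1" "0 < r'" "r' < 1"
    using s(2,3) s'(2,3) by auto
  then have abs: "\<bar>r * \<sigma>\<bar> = r" "\<bar>r * \<tau>\<bar> = r" "\<bar>r' * \<sigma>'\<bar> = r'" "\<bar>r' * \<tau>'\<bar> = r'"
    using s(4,5) s'(4,5) by (simp_all add: abs_mult)
  have "a = a'" "b = b'"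
    using s(6,7) s'(6,7) abs r by (intro nat_eq_if_double_dist_less_two; linarith)+
  then have "r * \<sigma> = r' * \<sigma>'" "r * \<tau> = r' * \<tau>'"
    using s(6,7) s'(6,7) by simp_all
  moreover from this have "r = r'"
    using abs by metis
  ultimately have "\<sigma> = \<sigma>'" "\<tau> = \<tau>'"
    using r by simp_all
  then have "x = x'" "y = y'"
    using s(8,9) s'(8,9) \<open>a = a'\<close> \<open>b = b'\<close> by simp_all
  then show False
    using assms(3) s(1) s'(1) \<open>a = a'\<close> \<open>b = b'\<close> by simp
qed

definition grid_or_htree_vertex :: "nat \<Rightarrow> bool" where
  "grid_or_htree_vertex w \<longleftrightarrow>
     (\<exists>x y. w = grid_vertex x y) \<or> (\<exists>a b. w = tree_vertex a b \<and> htree_point (a, b))"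

lemma vertex_on_grid_hedge:
  assumes "grid_hedge e" "grid_or_htree_vertex w" "lattice_pos w \<in> edge_image e"
  shows "w \<in> e"
proof -
  obtain x y where e: "e = {grid_vertex x y, grid_vertex (Suc x) y}" "Im (lattice_pos w) = real (2 * y + 1)"
    "real (2 * x + 1) \<le> Re (lattice_pos w)" "Re (lattice_pos w) \<le> real (2 * x + 3)"
    using assms(1,3) by (rule grid_hedgeE)
  from assms(2) show ?thesis
    unfolding grid_or_htree_vertex_def
  proof (elim disjE exE conjE)
    fix x' y' assume w: "w = grid_vertex x' y'"
    then have "x' = x \<or> x' = Suc x"
      using e(3,4) by (intro odd_between_consecutive_odds) simp_all
    moreover have "y' = y"
      using e(2) w by simp
    ultimately show ?thesis
      using e(1) w by auto
  next
    fix a b assume "w = tree_vertex a b"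
    then show ?thesis
      using e(2) odd_real_neq_even_real[of y b] by simp
  qed
qed

lemma vertex_on_grid_vedge:
  assumes "grid_vedge e" "grid_or_htree_vertex w" "lattice_pos w \<in> edge_image e"
  shows "w \<in> e"
proof -
  obtain x y where e: "e = {grid_vertex x y, grid_vertex x (Suc y)}" "Re (lattice_pos w) = real (2 * x + 1)"
    "real (2 * y + 1) \<le> Im (lattice_pos w)" "Im (lattice_pos w) \<le> real (2 * y + 3)"
    using assms(1,3) by (rule grid_vedgeE)
  from assms(2) show ?thesis
    unfolding grid_or_htree_vertex_def
  proof (elim disjE exE conjE)
    fix x' y' assume w: "w = grid_vertex x' y'"
    then have "y' = y \<or> y' = Suc y"
      using e(3,4) by (intro odd_between_consecutive_odds) simp_all
    moreover have "x' = x"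
      using e(2) w by simp
    ultimately show ?thesis
      using e(1) w by auto
  next
    fix a b assume "w = tree_vertex a b"
    then show ?thesis
      using e(2) odd_real_neq_even_real[of x a] by simp
  qed
qed

lemma vertex_on_tree_hedge:
  assumes "tree_hedge e" "grid_or_htree_vertex w" "lattice_pos w \<in> edge_image e"
  shows "w \<in> e"
proof -
  obtain u t q where e: "t mod 4 = 1 \<or> t mod 4 = 2"
    "e = {tree_vertex (2 ^ u * t) (2 ^ u * (4 * q + 2)), tree_vertex (2 ^ u * (t + 1)) (2 ^ u * (4 * q + 2))}"
    "Im (lattice_pos w) = real (2 * (2 ^ u * (4 * q + 2)))"
    "real (2 * (2 ^ u * t)) \<le> Re (lattice_pos w)" "Re (lattice_pos w) \<le> real (2 * (2 ^ u * (t + 1)))"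
    using assms(1,3) by (rule tree_hedgeE)
  from assms(2) show ?thesis
    unfolding grid_or_htree_vertex_def
  proof (elim disjE exE conjE)
    fix x y assume "w = grid_vertex x y"
    then show ?thesis
      using e(3) odd_real_neq_even_real[of y "2 ^ u * (4 * q + 2)"] by simp
  next
    fix a b assume w: "w = tree_vertex a b" and "htree_point (a, b)"
    have "b = 2 ^ u * (4 * q + 2)"
      using e(3) w by (simp only: lattice_pos_lattice_point complex.sel of_nat_eq_iff)
    then have "2 ^ u dvd a"
      using \<open>htree_point (a, b)\<close> htree_point_row_dvd by blast
    moreover have "2 ^ u * t \<le> a" "a \<le> 2 ^ u * (t + 1)"
      using e(4,5) w by (simp_all only: lattice_pos_lattice_point complex.sel of_nat_le_iff)
    ultimately have "a = 2 ^ u * t \<or> a = 2 ^ u * (t + 1)"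
      using dvd_between_multiples_cases by blast
    then show ?thesis
      using e(2) w \<open>b = 2 ^ u * (4 * q + 2)\<close> by auto
  qed
qed

lemma vertex_on_tree_vedge:
  assumes "tree_vedge e" "grid_or_htree_vertex w" "lattice_pos w \<in> edge_image e"
  shows "w \<in> e"
proof -
  obtain u p s where e: "s mod 4 = 1 \<or> s mod 4 = 2"
    "e = {tree_vertex (2 ^ u * (2 * p + 1)) (2 ^ u * s), tree_vertex (2 ^ u * (2 * p + 1)) (2 ^ u * (s + 1))}"
    "Re (lattice_pos w) = real (2 * (2 ^ u * (2 * p + 1)))"
    "real (2 * (2 ^ u * s)) \<le> Im (lattice_pos w)" "Im (lattice_pos w) \<le> real (2 * (2 ^ u * (s + 1)))"
    using assms(1,3) by (rule tree_vedgeE)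
  from assms(2) show ?thesis
    unfolding grid_or_htree_vertex_def
  proof (elim disjE exE conjE)
    fix x y assume "w = grid_vertex x y"
    then show ?thesis
      using e(3) odd_real_neq_even_real[of x "2 ^ u * (2 * p + 1)"] by simp
  next
    fix a b assume w: "w = tree_vertex a b" and "htree_point (a, b)"
    have "a = 2 ^ u * (2 * p + 1)"
      using e(3) w by (simp only: lattice_pos_lattice_point complex.sel of_nat_eq_iff)
    then have "2 ^ u dvd b"
      using \<open>htree_point (a, b)\<close> htree_point_column_dvd by blast
    moreover have "2 ^ u * s \<le> b" "b \<le> 2 ^ u * (s + 1)"
      using e(4,5) w by (simp_all only: lattice_pos_lattice_point complex.sel of_nat_le_iff)
    ultimately have "b = 2 ^ u * s \<or> b = 2 ^ u * (s + 1)"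
      using dvd_between_multiples_cases by blast
    then show ?thesis
      using e(2) w \<open>a = 2 ^ u * (2 * p + 1)\<close> by auto
  qed
qed

lemma vertex_on_spoke:
  assumes "spoke e" "lattice_pos w \<in> edge_image e"
  shows "w \<in> e"
proof -
  have "Re (lattice_pos w) = real (fst (prod_decode w))"
    by (simp add: lattice_pos_def)
  then have "lattice_pos w \<in> lattice_pos ` e"
    using spoke_meets_lattice_line_at_end[OF assms] by blast
  then show ?thesis
    using inj_lattice_pos by (auto dest: injD)
qed

lemma vertex_on_lattice_edge:
  assumes "lattice_edge e" "grid_or_htree_vertex w" "lattice_pos w \<in> edge_image e"
  shows "w \<in> e"
  using assms vertex_on_grid_hedge vertex_on_grid_vedge vertex_on_tree_hedge vertex_on_tree_vedge
    vertex_on_spoke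
  unfolding lattice_edge_def grid_edge_def tree_edge_def by blast

lemma lattice_edges_cross_at_grid_midpoint:
  assumes "lattice_edge e" "lattice_edge f" "e \<noteq> f" "z \<in> edge_image e" "z \<in> edge_image f"
    "z \<notin> lattice_pos ` (e \<union> f)"
  shows "grid_edge e \<and> tree_edge f \<and> z = edge_midpoint e \<or> grid_edge f \<and> tree_edge e \<and> z = edge_midpoint f"
proof -
  have on_line: "\<exists>N. Re z = real N \<or> Im z = real N" if "grid_edge g \<or> tree_edge g" "z \<in> edge_image g" for g
    using that unfolding grid_edge_def tree_edge_def
    by (elim disjE) (metis grid_hedgeE, metis grid_vedgeE, metis tree_hedgeE, metis tree_vedgeE)
  have "\<not> spoke e"
  proof
    assume "spoke e"
    then show False
      using assms spokes_meet_at_end on_line spoke_meets_lattice_line_at_end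
      unfolding lattice_edge_def by blast
  qed
  moreover have "\<not> spoke f"
  proof
    assume "spoke f"
    then show False
      using assms spokes_meet_at_end on_line spoke_meets_lattice_line_at_end
      unfolding lattice_edge_def by blast
  qed
  ultimately have "grid_hedge e \<or> tree_hedge e \<or> grid_vedge e \<or> tree_vedge e"
    "grid_hedge f \<or> tree_hedge f \<or> grid_vedge f \<or> tree_vedge f"
    using assms(1,2) unfolding lattice_edge_def grid_edge_def tree_edge_def by blast+
  then show ?thesis
    using assms(3-6) horizontal_edges_meet_at_end vertical_edges_meet_at_end
      horizontal_vertical_crossing[of e f z] horizontal_vertical_crossing[of f e z]
    by (metis Un_commute)
qed

section \<open>The grid with an H-tree\<close>

text \<open>
  The H of level \<open>u + 1\<close> with centre \<open>(2 ^ u * (4 * p + 2), 2 ^ u * (4 * q + 2))\<close> joins its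
  centre to the two ends \<open>i = 1, 3\<close> of its horizontal bar, and each end to the two centres
  \<open>j = 1, 3\<close> of level \<open>u\<close> above and below it; it fits if it lies inside \<open>[0, 2 ^ m]\<^sup>2\<close>.
\<close>

definition htree_fits :: "nat \<Rightarrow> nat \<Rightarrow> nat \<Rightarrow> nat \<Rightarrow> bool" where
  "htree_fits m u p q \<longleftrightarrow> 2 ^ u * (4 * p + 4) \<le> (2::nat) ^ m \<and> 2 ^ u * (4 * q + 4) \<le> (2::nat) ^ m"

definition htree_centres :: "nat \<Rightarrow> (nat \<times> nat) set" where
  "htree_centres m = {(2 ^ v * (2 * p + 1), 2 ^ v * (2 * q + 1)) | v p q.
     2 ^ v * (2 * p + 1) < (2::nat) ^ m \<and> 2 ^ v * (2 * q + 1) < (2::nat) ^ m}"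

definition htree_bar_ends :: "nat \<Rightarrow> (nat \<times> nat) set" where
  "htree_bar_ends m = {(2 ^ u * (4 * p + i), 2 ^ u * (4 * q + 2)) | u p q i.
     (i = 1 \<or> i = 3) \<and> htree_fits m u p q}"

definition htree_nodes :: "nat \<Rightarrow> (nat \<times> nat) set" where
  "htree_nodes m = htree_centres m \<union> htree_bar_ends m"

definition htree_grid_vertices :: "nat \<Rightarrow> nat set" where
  "htree_grid_vertices m = {grid_vertex x y | x y. x < 2 ^ m \<and> y < 2 ^ m} \<union>
     {tree_vertex a b | a b. (a, b) \<in> htree_nodes m}"

definition htree_grid_edges :: "nat \<Rightarrow> nat set set" where
  "htree_grid_edges m =
     {{grid_vertex x y, grid_vertex (Suc x) y} | x y. Suc x < 2 ^ m \<and> y < 2 ^ m} \<union>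
     {{grid_vertex x y, grid_vertex x (Suc y)} | x y. x < 2 ^ m \<and> Suc y < 2 ^ m} \<union>
     {{tree_vertex (2 ^ u * (4 * p + 2)) (2 ^ u * (4 * q + 2)), tree_vertex (2 ^ u * (4 * p + i)) (2 ^ u * (4 * q + 2))}
       | u p q i. (i = 1 \<or> i = 3) \<and> htree_fits m u p q} \<union>
     {{tree_vertex (2 ^ u * (4 * p + i)) (2 ^ u * (4 * q + 2)), tree_vertex (2 ^ u * (4 * p + i)) (2 ^ u * (4 * q + j))}
       | u p q i j. (i = 1 \<or> i = 3) \<and> (j = 1 \<or> j = 3) \<and> htree_fits m u p q} \<union>
     {{tree_vertex a b, grid_vertex x y} | a b x y. (a, b) \<in> htree_nodes m \<and>
       (x = a \<or> Suc x = a) \<and> (y = b \<or> Suc y = b)}"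

lemma htree_fits_bounds:
  assumes "htree_fits m u p q" "i = 1 \<or> i = 3"
  shows "2 ^ u * (4 * p + i) < (2::nat) ^ m" "2 ^ u * (4 * q + i) < (2::nat) ^ m"
    "2 ^ u * (4 * p + 2) < (2::nat) ^ m" "2 ^ u * (4 * q + 2) < (2::nat) ^ m"
proof -
  have "2 ^ u * (4 * p + i) < (2::nat) ^ u * (4 * p + 4)" "2 ^ u * (4 * q + i) < (2::nat) ^ u * (4 * q + 4)"
    "2 ^ u * (4 * p + 2) < (2::nat) ^ u * (4 * p + 4)" "2 ^ u * (4 * q + 2) < (2::nat) ^ u * (4 * q + 4)"
    unfolding mult_less_cancel1 using assms(2) by auto
  then show "2 ^ u * (4 * p + i) < (2::nat) ^ m" "2 ^ u * (4 * q + i) < (2::nat) ^ m"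
    "2 ^ u * (4 * p + 2) < (2::nat) ^ m" "2 ^ u * (4 * q + 2) < (2::nat) ^ m"
    using assms(1) unfolding htree_fits_def by linarith+
qed

lemma htree_centre_mem:
  assumes "htree_fits m u p q"
  shows "(2 ^ u * (4 * p + 2), 2 ^ u * (4 * q + 2)) \<in> htree_centres m"
proof -
  have "(2::nat) ^ u * (4 * p + 2) = 2 ^ Suc u * (2 * p + 1)" "(2::nat) ^ u * (4 * q + 2) = 2 ^ Suc u * (2 * q + 1)"
    by simp_all
  then show ?thesis
    using htree_fits_bounds[OF assms, of 1] unfolding htree_centres_def by fastforce
qed

lemma htree_child_mem:
  assumes "htree_fits m u p q" "i = 1 \<or> i = 3" "j = 1 \<or> j = 3"
  shows "(2 ^ u * (4 * p + i), 2 ^ u * (4 * q + j)) \<in> htree_centres m"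
  using htree_fits_bounds[OF assms(1,2)] htree_fits_bounds[OF assms(1,3)]
  unfolding htree_centres_def odd_form_of_1_or_3_mod_4[OF assms(2)] odd_form_of_1_or_3_mod_4[OF assms(3)]
  by blast

lemma htree_bar_end_mem:
  "htree_fits m u p q \<Longrightarrow> i = 1 \<or> i = 3 \<Longrightarrow> (2 ^ u * (4 * p + i), 2 ^ u * (4 * q + 2)) \<in> htree_bar_ends m"
  unfolding htree_bar_ends_def by blast

lemma htree_point_if_htree_node: "c \<in> htree_nodes m \<Longrightarrow> htree_point c"
  unfolding htree_nodes_def htree_centres_def htree_bar_ends_def htree_point_def by blast

lemma htree_coordinates_bounds:
  assumes "(a, b) \<in> htree_nodes m"
  shows "0 < a" "a < 2 ^ m" "0 < b" "b < 2 ^ m"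
proof -
  have "(0 < a \<and> a < 2 ^ m) \<and> (0 < b \<and> b < 2 ^ m)"
  proof (cases "(a, b) \<in> htree_centres m")
    case True
    then show ?thesis
      unfolding htree_centres_def by auto
  next
    case False
    then obtain u p q i where "a = 2 ^ u * (4 * p + i)" "b = 2 ^ u * (4 * q + 2)" "i = 1 \<or> i = 3"
      "htree_fits m u p q"
      using assms unfolding htree_nodes_def htree_bar_ends_def by blast
    then show ?thesis
      using htree_fits_bounds[of m u p q i] by auto
  qed
  then show "0 < a" "a < 2 ^ m" "0 < b" "b < 2 ^ m"
    by auto
qed

lemma htree_grid_edgesE:
  assumes "e \<in> htree_grid_edges m"
  obtains (grid_row) x y where "Suc x < 2 ^ m" "y < 2 ^ m" "e = {grid_vertex x y, grid_vertex (Suc x) y}"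
  | (grid_column) x y where "x < 2 ^ m" "Suc y < 2 ^ m" "e = {grid_vertex x y, grid_vertex x (Suc y)}"
  | (bar) u p q i where "i = 1 \<or> i = 3" "htree_fits m u p q"
      "e = {tree_vertex (2 ^ u * (4 * p + 2)) (2 ^ u * (4 * q + 2)), tree_vertex (2 ^ u * (4 * p + i)) (2 ^ u * (4 * q + 2))}"
  | (leg) u p q i j where "i = 1 \<or> i = 3" "j = 1 \<or> j = 3" "htree_fits m u p q"
      "e = {tree_vertex (2 ^ u * (4 * p + i)) (2 ^ u * (4 * q + 2)), tree_vertex (2 ^ u * (4 * p + i)) (2 ^ u * (4 * q + j))}"
  | (spoke) a b x y where "(a, b) \<in> htree_nodes m" "x = a \<or> Suc x = a" "y = b \<or> Suc y = b"
      "e = {tree_vertex a b, grid_vertex x y}"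
  using assms unfolding htree_grid_edges_def by (elim UnE CollectE exE conjE) (rule that; assumption)+

lemma grid_vertex_mem: "x < 2 ^ m \<Longrightarrow> y < 2 ^ m \<Longrightarrow> grid_vertex x y \<in> htree_grid_vertices m"
  unfolding htree_grid_vertices_def by blast

lemma tree_vertex_mem: "(a, b) \<in> htree_nodes m \<Longrightarrow> tree_vertex a b \<in> htree_grid_vertices m"
  unfolding htree_grid_vertices_def by blast

lemma htree_centre_vertex:
  assumes "htree_fits m u p q"
  shows "tree_vertex (2 ^ u * (4 * p + 2)) (2 ^ u * (4 * q + 2)) \<in> htree_grid_vertices m"
proof -
  have "(2 ^ u * (4 * p + 2), 2 ^ u * (4 * q + 2)) \<in> htree_nodes m"
    unfolding htree_nodes_def using htree_centre_mem[OF assms] by (rule UnI1)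
  then show ?thesis
    by (rule tree_vertex_mem)
qed

lemma htree_bar_end_vertex:
  assumes "htree_fits m u p q" "i = 1 \<or> i = 3"
  shows "tree_vertex (2 ^ u * (4 * p + i)) (2 ^ u * (4 * q + 2)) \<in> htree_grid_vertices m"
proof -
  have "(2 ^ u * (4 * p + i), 2 ^ u * (4 * q + 2)) \<in> htree_nodes m"
    unfolding htree_nodes_def using htree_bar_end_mem[OF assms] by (rule UnI2)
  then show ?thesis
    by (rule tree_vertex_mem)
qed

lemma htree_child_vertex:
  assumes "htree_fits m u p q" "i = 1 \<or> i = 3" "j = 1 \<or> j = 3"
  shows "tree_vertex (2 ^ u * (4 * p + i)) (2 ^ u * (4 * q + j)) \<in> htree_grid_vertices m"
proof -
  have "(2 ^ u * (4 * p + i), 2 ^ u * (4 * q + j)) \<in> htree_nodes m"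
    unfolding htree_nodes_def using htree_child_mem[OF assms] by (rule UnI1)
  then show ?thesis
    by (rule tree_vertex_mem)
qed

lemma finite_htree_grid_vertices: "finite (htree_grid_vertices m)"
proof -
  have "htree_nodes m \<subseteq> {..<2 ^ m} \<times> {..<2 ^ m}"
    using htree_coordinates_bounds by fastforce
  then have "finite (htree_nodes m)"
    by (rule finite_subset) simp
  moreover have "htree_grid_vertices m = (\<lambda>(x, y). grid_vertex x y) ` ({..<2 ^ m} \<times> {..<2 ^ m}) \<union>
      (\<lambda>(a, b). tree_vertex a b) ` htree_nodes m"
    unfolding htree_grid_vertices_def by fast
  ultimately show ?thesis
    by simp
qed

lemma edge_pairI: "v \<in> V \<Longrightarrow> w \<in> V \<Longrightarrow> v \<noteq> w \<Longrightarrow> e = {v, w} \<Longrightarrow> \<exists>v w. v \<in> V \<and> w \<in> V \<and> v \<noteq> w \<and> e = {v, w}"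
  by blast

lemma tree_vertex_neqI: "a \<noteq> a' \<or> b \<noteq> b' \<Longrightarrow> tree_vertex a b \<noteq> tree_vertex a' b'"
  by simp

lemma power_two_mult_neqI: "a \<noteq> b \<Longrightarrow> (2::nat) ^ u * a \<noteq> 2 ^ u * b"
  by simp

lemma sgraph_htree_grid: "sgraph (htree_grid_vertices m) (htree_grid_edges m)"
  unfolding sgraph_def
proof (intro conjI ballI)
  fix e assume "e \<in> htree_grid_edges m"
  then show "\<exists>v w. v \<in> htree_grid_vertices m \<and> w \<in> htree_grid_vertices m \<and> v \<noteq> w \<and> e = {v, w}"
  proof (cases rule: htree_grid_edgesE)
    case (grid_row x y)
    then show ?thesis
      using grid_vertex_mem[of x m y] grid_vertex_mem[of "Suc x" m y] by (intro edge_pairI) simp_all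
  next
    case (grid_column x y)
    then show ?thesis
      using grid_vertex_mem[of x m y] grid_vertex_mem[of x m "Suc y"] by (intro edge_pairI) simp_all
  next
    case (bar u p q i)
    have "2 ^ u * (4 * p + 2) \<noteq> (2::nat) ^ u * (4 * p + i)"
      using bar(1) by (intro power_two_mult_neqI) auto
    then show ?thesis
      using edge_pairI[OF htree_centre_vertex[OF bar(2)] htree_bar_end_vertex[OF bar(2,1)]
          tree_vertex_neqI bar(3)] by blast
  next
    case (leg u p q i j)
    have "2 ^ u * (4 * q + 2) \<noteq> (2::nat) ^ u * (4 * q + j)"
      using leg(2) by (intro power_two_mult_neqI) auto
    then show ?thesis
      using edge_pairI[OF htree_bar_end_vertex[OF leg(3,1)] htree_child_vertex[OF leg(3,1,2)]
          tree_vertex_neqI leg(4)] by blast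
  next
    case (spoke a b x y)
    then have "x < 2 ^ m" "y < 2 ^ m"
      using htree_coordinates_bounds[OF spoke(1)] by auto
    then show ?thesis
      using spoke grid_vertex_mem tree_vertex_mem by (intro edge_pairI) simp_all
  qed
qed (rule finite_htree_grid_vertices)

lemma htree_grid_edge_lattice_edge:
  assumes "e \<in> htree_grid_edges m"
  shows "lattice_edge e"
  using assms
proof (cases rule: htree_grid_edgesE)
  case (grid_row x y)
  then show ?thesis
    unfolding lattice_edge_def grid_edge_def grid_hedge_def by blast
next
  case (grid_column x y)
  then show ?thesis
    unfolding lattice_edge_def grid_edge_def grid_vedge_def by blast
next
  case (bar u p q i)
  define t where "t = 4 * p + (i + 1) div 2"
  have t: "t mod 4 = 1 \<or> t mod 4 = 2" "{4 * p + 2, 4 * p + i} = {t, t + 1}"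
    using bar(1) unfolding t_def by auto
  have "e = (\<lambda>a. tree_vertex (2 ^ u * a) (2 ^ u * (4 * q + 2))) ` {4 * p + 2, 4 * p + i}"
    using bar(3) by (simp only: image_insert image_empty)
  then have "e = {tree_vertex (2 ^ u * t) (2 ^ u * (4 * q + 2)), tree_vertex (2 ^ u * (t + 1)) (2 ^ u * (4 * q + 2))}"
    unfolding t(2) by (simp only: image_insert image_empty)
  then show ?thesis
    using t(1) unfolding lattice_edge_def tree_edge_def tree_hedge_def by blast
next
  case (leg u p q i j)
  define s where "s = 4 * q + (j + 1) div 2"
  have s: "s mod 4 = 1 \<or> s mod 4 = 2" "{4 * q + 2, 4 * q + j} = {s, s + 1}"
    using leg(2) unfolding s_def by auto
  have "e = (\<lambda>b. tree_vertex (2 ^ u * (2 * (2 * p + i div 2) + 1)) (2 ^ u * b)) ` {4 * q + 2, 4 * q + j}"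
    using leg(4) unfolding odd_form_of_1_or_3_mod_4[OF leg(1)] by (simp only: image_insert image_empty)
  then have "e = {tree_vertex (2 ^ u * (2 * (2 * p + i div 2) + 1)) (2 ^ u * s),
      tree_vertex (2 ^ u * (2 * (2 * p + i div 2) + 1)) (2 ^ u * (s + 1))}"
    unfolding s(2) by (simp only: image_insert image_empty)
  then show ?thesis
    using s(1) unfolding lattice_edge_def tree_edge_def tree_vedge_def by blast
next
  case (spoke a b x y)
  then show ?thesis
    unfolding lattice_edge_def spoke_def by blast
qed

lemma htree_grid_vertex_kind:
  assumes "w \<in> htree_grid_vertices m"
  shows "grid_or_htree_vertex w"
proof -
  from assms consider x y where "w = grid_vertex x y"
    | a b where "w = tree_vertex a b" "(a, b) \<in> htree_nodes m"
    unfolding htree_grid_vertices_def by blast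
  then show ?thesis
    unfolding grid_or_htree_vertex_def by cases (use htree_point_if_htree_node in blast)+
qed

lemma embedding_htree_grid:
  "embedding (htree_grid_vertices m) (htree_grid_edges m) lattice_pos (straight_path lattice_pos)"
  using sgraph_htree_grid inj_on_subset[OF inj_lattice_pos subset_UNIV]
    vertex_on_lattice_edge[OF htree_grid_edge_lattice_edge htree_grid_vertex_kind]
  by (rule straight_line_embedding)

lemma one_gap_planar_htree_grid: "one_gap_planar (htree_grid_vertices m) (htree_grid_edges m)"
proof -
  have "one_gap_planar_embedding (htree_grid_vertices m) (htree_grid_edges m) lattice_pos (straight_path lattice_pos)"
  proof (rule one_gap_planar_embedding_if_crossings_at_midpoints[where G = "Collect grid_edge" and mid = edge_midpoint])
    fix p e f
    assume "e \<in> htree_grid_edges m" "f \<in> htree_grid_edges m" "e \<noteq> f" "p \<in> edge_image e" "p \<in> edge_image f"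
      "p \<notin> lattice_pos ` (e \<union> f)"
    then show "e \<in> Collect grid_edge \<and> f \<notin> Collect grid_edge \<and> p = edge_midpoint e \<or>
        f \<in> Collect grid_edge \<and> e \<notin> Collect grid_edge \<and> p = edge_midpoint f"
      using lattice_edges_cross_at_grid_midpoint htree_grid_edge_lattice_edge tree_edge_not_grid_edge
      by (metis mem_Collect_eq)
  qed (rule embedding_htree_grid)
  then show ?thesis
    unfolding one_gap_planar_def by blast
qed

lemma grid_row_edge_mem: "Suc x < 2 ^ m \<Longrightarrow> y < 2 ^ m \<Longrightarrow> {grid_vertex x y, grid_vertex (Suc x) y} \<in> htree_grid_edges m"
  unfolding htree_grid_edges_def by blast

lemma grid_column_edge_mem: "x < 2 ^ m \<Longrightarrow> Suc y < 2 ^ m \<Longrightarrow> {grid_vertex x y, grid_vertex x (Suc y)} \<in> htree_grid_edges m"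
  unfolding htree_grid_edges_def by blast

lemma walk_between_if_ordered:
  fixes x x' n :: nat
  assumes "\<And>a b. a \<le> b \<Longrightarrow> b < n \<Longrightarrow> \<exists>xs. walk V E xs \<and> set xs \<subseteq> X \<and> hd xs = f a \<and> last xs = f b"
    and "x < n" "x' < n"
  shows "\<exists>xs. walk V E xs \<and> set xs \<subseteq> X \<and> hd xs = f x \<and> last xs = f x'"
proof (cases "x \<le> x'")
  case True
  then show ?thesis
    using assms by blast
next
  case False
  then have "x' \<le> x"
    by simp
  then obtain xs where "walk V E xs" "set xs \<subseteq> X" "hd xs = f x'" "last xs = f x"
    using assms(1)[OF _ assms(2)] by blast
  then show ?thesis
    using walk_rev by (intro exI[of _ "rev xs"]) (auto simp: hd_rev last_rev)
qed

lemma grid_row_walk: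
  assumes "x < 2 ^ m" "x' < 2 ^ m" "y < 2 ^ m"
  shows "\<exists>xs. walk (htree_grid_vertices m) (htree_grid_edges m) xs \<and>
    set xs \<subseteq> {grid_vertex k y | k. k < 2 ^ m} \<and> hd xs = grid_vertex x y \<and> last xs = grid_vertex x' y"
proof (rule walk_between_if_ordered[where f = "\<lambda>k. grid_vertex k y", OF _ assms(1,2)])
  fix a b :: nat assume "a \<le> b" "b < 2 ^ m"
  let ?xs = "map (\<lambda>k. grid_vertex k y) [a..<Suc b]"
  have "walk (htree_grid_vertices m) (htree_grid_edges m) ?xs"
    using \<open>a \<le> b\<close> \<open>b < 2 ^ m\<close> assms(3)
    by (intro walk_map_upt ballI grid_vertex_mem grid_row_edge_mem) auto
  moreover have "set ?xs \<subseteq> {grid_vertex k y | k. k < 2 ^ m}"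
    using \<open>b < 2 ^ m\<close> by auto
  moreover have "hd ?xs = grid_vertex a y" "last ?xs = grid_vertex b y"
    using \<open>a \<le> b\<close> by (simp_all del: upt_Suc add: hd_map last_map)
  ultimately show "\<exists>xs. walk (htree_grid_vertices m) (htree_grid_edges m) xs \<and>
      set xs \<subseteq> {grid_vertex k y | k. k < 2 ^ m} \<and> hd xs = grid_vertex a y \<and> last xs = grid_vertex b y"
    by blast
qed

lemma grid_column_walk:
  assumes "x < 2 ^ m" "y < 2 ^ m" "y' < 2 ^ m"
  shows "\<exists>xs. walk (htree_grid_vertices m) (htree_grid_edges m) xs \<and>
    set xs \<subseteq> {grid_vertex x k | k. k < 2 ^ m} \<and> hd xs = grid_vertex x y \<and> last xs = grid_vertex x y'"
proof (rule walk_between_if_ordered[where f = "\<lambda>k. grid_vertex x k", OF _ assms(2,3)])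
  fix a b :: nat assume "a \<le> b" "b < 2 ^ m"
  let ?xs = "map (\<lambda>k. grid_vertex x k) [a..<Suc b]"
  have "walk (htree_grid_vertices m) (htree_grid_edges m) ?xs"
    using \<open>a \<le> b\<close> \<open>b < 2 ^ m\<close> assms(1)
    by (intro walk_map_upt ballI grid_vertex_mem grid_column_edge_mem) auto
  moreover have "set ?xs \<subseteq> {grid_vertex x k | k. k < 2 ^ m}"
    using \<open>b < 2 ^ m\<close> by auto
  moreover have "hd ?xs = grid_vertex x a" "last ?xs = grid_vertex x b"
    using \<open>a \<le> b\<close> by (simp_all del: upt_Suc add: hd_map last_map)
  ultimately show "\<exists>xs. walk (htree_grid_vertices m) (htree_grid_edges m) xs \<and>
      set xs \<subseteq> {grid_vertex x k | k. k < 2 ^ m} \<and> hd xs = grid_vertex x a \<and> last xs = grid_vertex x b"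
    by blast
qed

lemma grid_cross_connected:
  assumes ij: "i < 2 ^ m" "j < 2 ^ m"
  shows "connected_in (htree_grid_edges m) ({grid_vertex k i | k. k < 2 ^ m} \<union> {grid_vertex j k | k. k < 2 ^ m})"
    (is "connected_in _ (?R \<union> ?C)")
proof (rule connected_inI_centre)
  show "grid_vertex j i \<in> ?R \<union> ?C"
    using ij by blast
  fix u assume "u \<in> ?R \<union> ?C"
  then consider (row) k where "u = grid_vertex k i" "k < 2 ^ m" | (column) k where "u = grid_vertex j k" "k < 2 ^ m"
    by blast
  then show "\<exists>xs. walk (htree_grid_vertices m) (htree_grid_edges m) xs \<and> set xs \<subseteq> ?R \<union> ?C \<and>
      hd xs = u \<and> last xs = grid_vertex j i"
  proof cases
    case row
    then obtain xs where "walk (htree_grid_vertices m) (htree_grid_edges m) xs" "set xs \<subseteq> ?R"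
      "hd xs = u" "last xs = grid_vertex j i"
      using grid_row_walk[OF row(2) ij(2,1)] by blast
    then show ?thesis
      by blast
  next
    case column
    then obtain xs where "walk (htree_grid_vertices m) (htree_grid_edges m) xs" "set xs \<subseteq> ?C"
      "hd xs = u" "last xs = grid_vertex j i"
      using grid_column_walk[OF ij(2) column(2) ij(1)] by blast
    then show ?thesis
      by blast
  qed
qed

lemma treewidth_htree_grid: "2 ^ m - 1 \<le> treewidth (htree_grid_vertices m) (htree_grid_edges m)"
proof (rule treewidth_ge_if_large_bags[OF sgraph_htree_grid])
  fix N T B assume td: "tree_decomposition (htree_grid_vertices m) (htree_grid_edges m) N T B"
  define R where "R y = {grid_vertex k y | k. k < 2 ^ m}" for y
  define C where "C x = {grid_vertex x k | k. k < 2 ^ m}" for x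
  show "\<exists>t\<in>N. 2 ^ m \<le> card (B t)"
  proof (rule tree_decomposition_large_bag[OF td finite_htree_grid_vertices])
    show "R i \<inter> C j \<noteq> {}" if "i < 2 ^ m" "j < 2 ^ m" for i j
      using that unfolding R_def C_def by blast
    show "disjoint_family_on R {..<2 ^ m}" "disjoint_family_on C {..<2 ^ m}"
      unfolding disjoint_family_on_def R_def C_def by auto
    show "connected_in (htree_grid_edges m) (R i \<union> C j) \<and> R i \<union> C j \<subseteq> htree_grid_vertices m"
      if "i < 2 ^ m" "j < 2 ^ m" for i j
      using grid_cross_connected[OF that] that grid_vertex_mem unfolding R_def C_def by blast
  qed
qed

lemma htree_bar_mem:
  "htree_fits m u p q \<Longrightarrow> i = 1 \<or> i = 3 \<Longrightarrow>
    {tree_vertex (2 ^ u * (4 * p + 2)) (2 ^ u * (4 * q + 2)), tree_vertex (2 ^ u * (4 * p + i)) (2 ^ u * (4 * q + 2))}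
      \<in> htree_grid_edges m"
  unfolding htree_grid_edges_def by blast

lemma htree_leg_mem:
  "htree_fits m u p q \<Longrightarrow> i = 1 \<or> i = 3 \<Longrightarrow> j = 1 \<or> j = 3 \<Longrightarrow>
    {tree_vertex (2 ^ u * (4 * p + i)) (2 ^ u * (4 * q + 2)), tree_vertex (2 ^ u * (4 * p + i)) (2 ^ u * (4 * q + j))}
      \<in> htree_grid_edges m"
  unfolding htree_grid_edges_def by blast

lemma spoke_mem:
  "(a, b) \<in> htree_nodes m \<Longrightarrow> x = a \<or> Suc x = a \<Longrightarrow> y = b \<or> Suc y = b \<Longrightarrow>
    {tree_vertex a b, grid_vertex x y} \<in> htree_grid_edges m"
  unfolding htree_grid_edges_def by blast

lemma htree_centre_memI:
  "2 ^ v * (2 * p + 1) < (2::nat) ^ m \<Longrightarrow> 2 ^ v * (2 * q + 1) < (2::nat) ^ m \<Longrightarrow>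
    (2 ^ v * (2 * p + 1), 2 ^ v * (2 * q + 1)) \<in> htree_nodes m"
  unfolding htree_nodes_def htree_centres_def by blast

lemma level_less_if_below_power:
  assumes "2 ^ v * (2 * p + 1) < (2::nat) ^ m"
  shows "v < m"
proof (rule ccontr)
  assume "\<not> v < m"
  then have "(2::nat) ^ m \<le> 2 ^ v * (2 * p + 1)"
    using power_increasing[of m v "2::nat"] by (simp add: trans_le_add1)
  then show False
    using assms by simp
qed

lemma htree_fits_parent:
  assumes "2 ^ v * (2 * p + 1) < (2::nat) ^ m" "2 ^ v * (2 * q + 1) < (2::nat) ^ m" "v + 2 \<le> m"
  shows "htree_fits m v (p div 2) (q div 2)"
proof -
  define d where "d = m - v - 2"
  define K where "K = (2::nat) ^ d"
  have "m = v + 2 + d"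
    using assms(3) unfolding d_def by simp
  then have m: "(2::nat) ^ m = 2 ^ v * (4 * K)"
    unfolding K_def by (simp add: power_add mult_ac)
  have "2 * p + 1 < 4 * K" "2 * q + 1 < 4 * K"
    using assms(1,2) unfolding m mult_less_cancel1 by simp_all
  then have "4 * (p div 2) + 4 \<le> 4 * K" "4 * (q div 2) + 4 \<le> 4 * K"
    by presburger+
  then show ?thesis
    unfolding htree_fits_def m using mult_le_mono2 by blast
qed

lemma htree_bar_end_adjacent:
  assumes "htree_fits m u p q" "i = 1 \<or> i = 3"
  shows "reachable_within (htree_grid_vertices m) (htree_grid_edges m) 1
    (tree_vertex (2 ^ u * (4 * p + 2)) (2 ^ u * (4 * q + 2))) (tree_vertex (2 ^ u * (4 * p + i)) (2 ^ u * (4 * q + 2)))"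
  using htree_bar_mem[OF assms] htree_centre_vertex[OF assms(1)] htree_bar_end_vertex[OF assms]
  by (rule reachable_within_edge)

lemma htree_child_reachable:
  assumes "htree_fits m u p q" "i = 1 \<or> i = 3" "j = 1 \<or> j = 3"
  shows "reachable_within (htree_grid_vertices m) (htree_grid_edges m) 2
    (tree_vertex (2 ^ u * (4 * p + 2)) (2 ^ u * (4 * q + 2))) (tree_vertex (2 ^ u * (4 * p + i)) (2 ^ u * (4 * q + j)))"
proof -
  have "reachable_within (htree_grid_vertices m) (htree_grid_edges m) 1
      (tree_vertex (2 ^ u * (4 * p + i)) (2 ^ u * (4 * q + 2))) (tree_vertex (2 ^ u * (4 * p + i)) (2 ^ u * (4 * q + j)))"
    using htree_leg_mem[OF assms] htree_bar_end_vertex[OF assms(1,2)] htree_child_vertex[OF assms]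
    by (rule reachable_within_edge)
  from reachable_within_trans[OF htree_bar_end_adjacent[OF assms(1,2)] this] show ?thesis
    by (simp only: one_add_one)
qed

lemma htree_centre_reachable:
  assumes "2 ^ v * (2 * p + 1) < (2::nat) ^ m" "2 ^ v * (2 * q + 1) < (2::nat) ^ m"
  shows "reachable_within (htree_grid_vertices m) (htree_grid_edges m) (2 * (m - 1 - v))
    (tree_vertex (2 ^ (m - 1)) (2 ^ (m - 1))) (tree_vertex (2 ^ v * (2 * p + 1)) (2 ^ v * (2 * q + 1)))"
  using assms
proof (induction "m - 1 - v" arbitrary: v p q)
  case 0
  have "v < m"
    using "0.prems"(1) by (rule level_less_if_below_power)
  then have m: "m = Suc v"
    using "0.hyps" by simp
  have "2 ^ v * (2 * p + 1) < 2 ^ v * (2::nat)" "2 ^ v * (2 * q + 1) < 2 ^ v * (2::nat)"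
    using "0.prems" unfolding m power_Suc2 .
  then have "p = 0" "q = 0"
    unfolding mult_less_cancel1 by simp_all
  then have "2 ^ (m - 1) = 2 ^ v * (2 * p + (1::nat))" "2 ^ (m - 1) = 2 ^ v * (2 * q + (1::nat))"
    "2 * (m - 1 - v) = 0"
    using m by simp_all
  then show ?case
    using reachable_within_refl[OF tree_vertex_mem[OF htree_centre_memI[OF "0.prems"]]] by simp
next
  case (Suc d)
  define p' q' where "p' = p div 2" and "q' = q div 2"
  have fits: "htree_fits m v p' q'"
    unfolding p'_def q'_def using Suc by (intro htree_fits_parent) auto
  \<comment> \<open>the path runs through the parent centre, of level \<open>v + 1\<close>, and the end of its bar\<close>
  have parent_eq: "2 ^ Suc v * (2 * p' + 1) = 2 ^ v * (4 * p' + (2::nat))"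
    "2 ^ Suc v * (2 * q' + 1) = 2 ^ v * (4 * q' + (2::nat))"
    by simp_all
  have "2 ^ Suc v * (2 * p' + 1) < (2::nat) ^ m" "2 ^ Suc v * (2 * q' + 1) < (2::nat) ^ m"
    unfolding parent_eq using htree_fits_bounds(3,4)[OF fits, of 1] by simp_all
  moreover have "d = m - 1 - Suc v"
    using Suc.hyps(2) by simp
  ultimately have parent: "reachable_within (htree_grid_vertices m) (htree_grid_edges m) (2 * d)
      (tree_vertex (2 ^ (m - 1)) (2 ^ (m - 1))) (tree_vertex (2 ^ v * (4 * p' + 2)) (2 ^ v * (4 * q' + 2)))"
    using Suc.hyps(1)[of "Suc v" p' q'] unfolding parent_eq by simp
  define i j where "i = (if even p then 1 else 3 :: nat)" and "j = (if even q then 1 else 3 :: nat)"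
  have ij: "i = 1 \<or> i = 3" "4 * p' + i = 2 * p + 1" "j = 1 \<or> j = 3" "4 * q' + j = 2 * q + 1"
    unfolding i_def j_def p'_def q'_def by presburger+
  have "reachable_within (htree_grid_vertices m) (htree_grid_edges m) (2 * d + 2)
      (tree_vertex (2 ^ (m - 1)) (2 ^ (m - 1))) (tree_vertex (2 ^ v * (4 * p' + i)) (2 ^ v * (4 * q' + j)))"
    using reachable_within_trans[OF parent htree_child_reachable[OF fits ij(1,3)]] .
  moreover have "2 * d + 2 = 2 * (m - 1 - v)"
    using Suc.hyps(2) by simp
  ultimately show ?case
    unfolding ij(2,4) by simp
qed

lemma odd_round_less_double: "x < 2 * M \<Longrightarrow> 2 * (x div 2) + 1 < 2 * (M::nat)"
  by presburger

lemma grid_vertex_reachable_from_root: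
  assumes "1 \<le> m" "x < 2 ^ m" "y < 2 ^ m"
  shows "reachable_within (htree_grid_vertices m) (htree_grid_edges m) (2 * m - 1)
    (tree_vertex (2 ^ (m - 1)) (2 ^ (m - 1))) (grid_vertex x y)"
proof -
  \<comment> \<open>every grid vertex is joined by a spoke to the centre of level 0 of its \<open>2 \<times> 2\<close> block\<close>
  define a b where "a = 2 * (x div 2) + 1" and "b = 2 * (y div 2) + 1"
  have "(2::nat) ^ m = 2 * 2 ^ (m - 1)"
    using assms(1) by (metis Suc_diff_1 less_le_trans power_Suc zero_less_one)
  then have ab: "2 ^ 0 * (2 * (x div 2) + 1) < (2::nat) ^ m" "2 ^ 0 * (2 * (y div 2) + 1) < (2::nat) ^ m"
    using assms(2,3) odd_round_less_double by simp_all
  have "reachable_within (htree_grid_vertices m) (htree_grid_edges m) (2 * (m - 1))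
      (tree_vertex (2 ^ (m - 1)) (2 ^ (m - 1))) (tree_vertex a b)"
    using htree_centre_reachable[OF ab] unfolding a_def b_def by simp
  moreover have "reachable_within (htree_grid_vertices m) (htree_grid_edges m) 1 (tree_vertex a b) (grid_vertex x y)"
  proof (rule reachable_within_edge)
    have "(a, b) \<in> htree_nodes m"
      using htree_centre_memI[OF ab] unfolding a_def b_def by simp
    then show "{tree_vertex a b, grid_vertex x y} \<in> htree_grid_edges m" "tree_vertex a b \<in> htree_grid_vertices m"
      unfolding a_def b_def by (intro spoke_mem tree_vertex_mem; presburger)+
    show "grid_vertex x y \<in> htree_grid_vertices m"
      using assms(2,3) by (rule grid_vertex_mem)
  qed
  ultimately have "reachable_within (htree_grid_vertices m) (htree_grid_edges m) (2 * (m - 1) + 1)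
      (tree_vertex (2 ^ (m - 1)) (2 ^ (m - 1))) (grid_vertex x y)"
    by (rule reachable_within_trans)
  moreover have "2 * (m - 1) + 1 = 2 * m - 1"
    using assms(1) by simp
  ultimately show ?thesis
    by simp
qed

lemma htree_bar_end_reachable_from_root:
  assumes "htree_fits m u p q" "i = 1 \<or> i = 3"
  shows "reachable_within (htree_grid_vertices m) (htree_grid_edges m) (2 * m - 1)
    (tree_vertex (2 ^ (m - 1)) (2 ^ (m - 1))) (tree_vertex (2 ^ u * (4 * p + i)) (2 ^ u * (4 * q + 2)))"
proof -
  have parent_eq: "2 ^ Suc u * (2 * p + 1) = 2 ^ u * (4 * p + (2::nat))"
    "2 ^ Suc u * (2 * q + 1) = 2 ^ u * (4 * q + (2::nat))"
    by simp_all
  have bounds: "2 ^ Suc u * (2 * p + 1) < (2::nat) ^ m" "2 ^ Suc u * (2 * q + 1) < (2::nat) ^ m"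
    unfolding parent_eq using htree_fits_bounds(3,4)[OF assms(1), of 1] by simp_all
  have "reachable_within (htree_grid_vertices m) (htree_grid_edges m) (2 * (m - 1 - Suc u))
      (tree_vertex (2 ^ (m - 1)) (2 ^ (m - 1))) (tree_vertex (2 ^ u * (4 * p + 2)) (2 ^ u * (4 * q + 2)))"
    using htree_centre_reachable[OF bounds] unfolding parent_eq .
  then have "reachable_within (htree_grid_vertices m) (htree_grid_edges m) (2 * (m - 1 - Suc u) + 1)
      (tree_vertex (2 ^ (m - 1)) (2 ^ (m - 1))) (tree_vertex (2 ^ u * (4 * p + i)) (2 ^ u * (4 * q + 2)))"
    using htree_bar_end_adjacent[OF assms] by (rule reachable_within_trans)
  moreover have "2 * (m - 1 - Suc u) + 1 \<le> 2 * m - 1"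
    using level_less_if_below_power[OF bounds(1)] by simp
  ultimately show ?thesis
    by (rule reachable_within_mono)
qed

lemma htree_grid_eccentricity:
  assumes "1 \<le> m" "w \<in> htree_grid_vertices m"
  shows "reachable_within (htree_grid_vertices m) (htree_grid_edges m) (2 * m - 1)
    (tree_vertex (2 ^ (m - 1)) (2 ^ (m - 1))) w"
proof -
  from assms(2) consider (grid) x y where "w = grid_vertex x y" "x < 2 ^ m" "y < 2 ^ m"
    | (centre) v p q where "w = tree_vertex (2 ^ v * (2 * p + 1)) (2 ^ v * (2 * q + 1))"
        "2 ^ v * (2 * p + 1) < (2::nat) ^ m" "2 ^ v * (2 * q + 1) < (2::nat) ^ m"
    | (bar_end) u p q i where "w = tree_vertex (2 ^ u * (4 * p + i)) (2 ^ u * (4 * q + 2))"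
        "i = 1 \<or> i = 3" "htree_fits m u p q"
    unfolding htree_grid_vertices_def htree_nodes_def htree_centres_def htree_bar_ends_def by blast
  then show ?thesis
  proof cases
    case grid
    then show ?thesis
      using grid_vertex_reachable_from_root[OF assms(1)] by simp
  next
    case centre
    have "2 * (m - 1 - v) \<le> 2 * m - 1"
      by simp
    then show ?thesis
      unfolding centre(1) by (rule reachable_within_mono[OF htree_centre_reachable[OF centre(2,3)]])
  next
    case bar_end
    then show ?thesis
      using htree_bar_end_reachable_from_root by simp
  qed
qed

lemma radius_htree_grid:
  assumes "1 \<le> m"
  shows "graph_radius (htree_grid_vertices m) (htree_grid_edges m) \<le> enat (2 * m - 1)"
proof (rule graph_radius_le)
  have "2 ^ (m - 1) * (2 * 0 + 1) < (2::nat) ^ m"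
    using assms by simp
  then show "tree_vertex (2 ^ (m - 1)) (2 ^ (m - 1)) \<in> htree_grid_vertices m"
    using tree_vertex_mem[OF htree_centre_memI] by fastforce
  show "\<forall>w\<in>htree_grid_vertices m. reachable_within (htree_grid_vertices m) (htree_grid_edges m) (2 * m - 1)
      (tree_vertex (2 ^ (m - 1)) (2 ^ (m - 1))) w"
    using htree_grid_eccentricity[OF assms] by blast
qed

section \<open>Choosing the size of the grid\<close>

lemma power_Suc_add_two_le_power_two:
  fixes n k :: nat
  assumes "1 \<le> n"
  shows "n ^ (k + 1) + 2 \<le> 2 ^ (k * n + (n + 1) div 2 + 1)"
proof -
  define h where "h = (n + 1) div 2"
  have "n ^ k \<le> (2 ^ n) ^ k"
    by (simp add: less_imp_le power_mono)
  also have "\<dots> = 2 ^ (k * n)"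
    by (simp only: power_mult[symmetric] mult.commute)
  finally have base: "n ^ k \<le> 2 ^ (k * n)" .
  have "h + 1 \<le> 2 ^ h"
    using less_exp[of h] by (simp add: Suc_le_eq)
  moreover have "n \<le> 2 * h"
    unfolding h_def by simp
  ultimately have factor: "n + 2 \<le> 2 ^ (h + 1)"
    by simp
  have "1 \<le> n ^ k"
    using assms by simp
  then have "n ^ (k + 1) + 2 \<le> n ^ k * (n + 2)"
    by (simp add: algebra_simps)
  also have "\<dots> \<le> 2 ^ (k * n) * 2 ^ (h + 1)"
    using base factor by (rule mult_le_mono)
  also have "\<dots> = 2 ^ (k * n + h + 1)"
    by (simp add: power_add)
  finally show ?thesis
    unfolding h_def .
qed

lemma double_exponent_le_radius_bound:
  fixes n k :: nat
  assumes "1 \<le> k"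
  shows "2 * (k * n + (n + 1) div 2 + 1) - 1 \<le> (2 * k + 1) * n + nat \<lceil>real k / 2\<rceil> + 1"
proof -
  have "1 \<le> nat \<lceil>real k / 2\<rceil>"
    using assms by linarith
  then show ?thesis
    by (simp add: algebra_simps)
qed

theorem lemma43:
  fixes n k :: nat
  assumes "n \<ge> 1" and "k \<ge> 1"
  shows "\<exists>(V :: nat set) E. sgraph V E \<and> one_gap_planar V E \<and>
           treewidth V E \<ge> n ^ (k + 1) + 1 \<and>
           graph_radius V E \<le> enat ((2 * k + 1) * n + nat \<lceil>real k / 2\<rceil> + 1)"
proof -
  define m where "m = k * n + (n + 1) div 2 + 1"
  have "n ^ (k + 1) + 1 \<le> 2 ^ m - 1"
    using power_Suc_add_two_le_power_two[OF assms(1), of k] unfolding m_def by linarith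
  also have "\<dots> \<le> treewidth (htree_grid_vertices m) (htree_grid_edges m)"
    by (rule treewidth_htree_grid)
  finally have treewidth: "n ^ (k + 1) + 1 \<le> treewidth (htree_grid_vertices m) (htree_grid_edges m)" .
  have "graph_radius (htree_grid_vertices m) (htree_grid_edges m) \<le> enat (2 * m - 1)"
    by (rule radius_htree_grid) (simp add: m_def)
  also have "\<dots> \<le> enat ((2 * k + 1) * n + nat \<lceil>real k / 2\<rceil> + 1)"
    using double_exponent_le_radius_bound[OF assms(2), of n] unfolding m_def by simp
  finally show ?thesis
    using sgraph_htree_grid one_gap_planar_htree_grid treewidth by blast
qed

end
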